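(* Let $\alpha\in[0,1]$ and let $F$ be an ordered graph. Suppose that for every $\varepsilon>0$ and every sufficiently large $d$ (in terms of $\varepsilon$ and $F$), every graph $G$ on $\{0,1\}^d$ satisfying \[ \frac{1}{d}\sum_{\ell=1}^d\frac{e_\ell(G)}{\tau_{\ell,d}}\ge\alpha+\varepsilon \] contains an ordered copy of $F$. Then $\lim_{d\to\infty}\lim_{m\to\infty}\rho_{<}(F,R(m,d))\le\alpha$, where $(R(m,d))$ is any family of graphs as described in the context.
   Context: An ordered graph is a graph whose vertex set carries a total order. An ordered graph $G$ contains an ordered copy of $F$ if there is an injective order-preserving map $V(F)\to V(G)$ sending edges to edges; otherwise $G$ is $F$-free. $\rho_{<}(F,G)=\max\{e(G')/e(G): G'\subseteq G,\ G'\ F\text{-free}\}$. For distinct $x,y\in\{0,1\}^d$, $\delta(x,y)=\min\{i:x_i\ne y_i\}$; $\{0,1\}^d$ is ordered lexicographically ($x<y$ iff $x_{\delta(x,y)}=0$). For a graph $G$ on $\{0,1\}^d$, a level-$\ell$ edge is an edge $uv$ with $\delta(u,v)=\ell$, $e_\ell(G)$ counts them, and $\tau_{\ell,d}=2^{2d-\ell-1}$. The set $\{0,1\}^d\times[m]$ is ordered lexicographically ($(x,i)<(y,j)$ iff $x<y$, or $x=y$ and $i<j$), blocks are $B_x=\{x\}\times[m]$, and an edge between $B_x$ and $B_y$ with $\delta(x,y)=\ell$ is a level-$\ell$ edge. The family $R(m,d)$ (an ordered graph on $\{0,1\}^d\times[m]$) satisfies: for every $d\in\mathbb{N}$ and $\varepsilon>0$,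 for all sufficiently large $m$, (i) for every $\ell\in[d]$, $e_\ell(R(m,d))=(1\pm\varepsilon)2^{d-1}m^2$ and $e(R(m,d))=(1\pm\varepsilon)d2^{d-1}m^2$; (ii) for all distinct $x,y\in\{0,1\}^d$ and $P\subseteq B_x$, $Q\subseteq B_y$ with $|P|,|Q|\ge m^{2/3}$, the number of edges of $R(m,d)$ between $P$ and $Q$ is at most $(1+\varepsilon)2^{-d+\delta(x,y)}|P||Q|$. Here $a=(1\pm\varepsilon)b$ means $(1-\varepsilon)b\le a\le(1+\varepsilon)b$. *)

theory Defs
  imports Complex_Main "HOL-Library.Liminf_Limsup" "HOL-Library.Extended_Real"
begin

(* The cube {0,1}^d: bit-lists of length d; False = 0, True = 1. *)
definition cube :: "nat \<Rightarrow> bool list set" where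
  "cube d = {x. length x = d}"

(* delta(x,y) = min{i : x_i \<noteq> y_i}, 1-based indices *)
definition delta :: "bool list \<Rightarrow> bool list \<Rightarrow> nat" where
  "delta x y = Suc (LEAST i. x ! i \<noteq> y ! i)"

definition lexless :: "bool list \<Rightarrow> bool list \<Rightarrow> bool" where
  "lexless x y \<longleftrightarrow> x \<noteq> y \<and> \<not> (x ! (delta x y - 1))"

definition blockless :: "bool list \<times> nat \<Rightarrow> bool list \<times> nat \<Rightarrow> bool" where
  "blockless u v \<longleftrightarrow> lexless (fst u) (fst v) \<or> (fst u = fst v \<and> snd u < snd v)"

definition is_graph :: "'a set \<Rightarrow> 'a set set \<Rightarrow> bool" where
  "is_graph V E \<longleftrightarrow> E \<subseteq> {e. \<exists>u v. u \<in> V \<and> v \<in> V \<and> u \<noteq> v \<and> e = {u, v}}"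

(* ordered graph F on vertex set {0..<k} (natural order) with edge set EF *)
definition is_ordered_pattern :: "nat \<Rightarrow> nat set set \<Rightarrow> bool" where
  "is_ordered_pattern k EF \<longleftrightarrow> is_graph {0..<k} EF"

definition contains_ordered_copy ::
  "('a \<Rightarrow> 'a \<Rightarrow> bool) \<Rightarrow> 'a set \<Rightarrow> 'a set set \<Rightarrow> nat \<Rightarrow> nat set set \<Rightarrow> bool" where
  "contains_ordered_copy lt V E k EF \<longleftrightarrow>
     (\<exists>f. (\<forall>i<k. f i \<in> V) \<and> (\<forall>i j. i < j \<longrightarrow> j < k \<longrightarrow> lt (f i) (f j)) \<and>
          (\<forall>i j. {i, j} \<in> EF \<longrightarrow> {f i, f j} \<in> E))"

(* rho_<(F,G) = max{ e(G')/e(G) : G' \<subseteq> G F-free }  (0 included as a harmless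
   default: the empty subgraph gives value 0 whenever F has an edge) *)
definition rho ::
  "('a \<Rightarrow> 'a \<Rightarrow> bool) \<Rightarrow> 'a set \<Rightarrow> 'a set set \<Rightarrow> nat \<Rightarrow> nat set set \<Rightarrow> real" where
  "rho lt V E k EF = Max (insert 0
     {real (card E') / real (card E) | E'. E' \<subseteq> E \<and> \<not> contains_ordered_copy lt V E' k EF})"

definition level_edges :: "bool list set set \<Rightarrow> nat \<Rightarrow> nat" where
  "level_edges E l = card {e \<in> E. \<exists>u v. e = {u, v} \<and> u \<noteq> v \<and> delta u v = l}"

definition tau :: "nat \<Rightarrow> nat \<Rightarrow> real" where
  "tau l d = 2 ^ (2 * d - l - 1)"

definition block_level_edges :: "(bool list \<times> nat) set set \<Rightarrow> nat \<Rightarrow> nat" where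
  "block_level_edges E l = card {e \<in> E. \<exists>u v. e = {u, v} \<and> fst u \<noteq> fst v \<and> delta (fst u) (fst v) = l}"

definition block :: "nat \<Rightarrow> bool list \<Rightarrow> (bool list \<times> nat) set" where
  "block m x = {x} \<times> {1..m}"

definition edges_between :: "'a set set \<Rightarrow> 'a set \<Rightarrow> 'a set \<Rightarrow> nat" where
  "edges_between E P Q = card {e \<in> E. \<exists>p\<in>P. \<exists>q\<in>Q. e = {p, q}}"

definition approx_eq :: "real \<Rightarrow> real \<Rightarrow> real \<Rightarrow> bool" where
  "approx_eq eps a b \<longleftrightarrow> (1 - eps) * b \<le> a \<and> a \<le> (1 + eps) * b"

definition R_family :: "(nat \<Rightarrow> nat \<Rightarrow> (bool list \<times> nat) set set) \<Rightarrow> bool" where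
  "R_family R \<longleftrightarrow>
     (\<forall>m d. is_graph (cube d \<times> {1..m}) (R m d)) \<and>
     (\<forall>d. \<forall>eps>0. \<exists>M. \<forall>m\<ge>M.
        (\<forall>l\<in>{1..d}. approx_eq eps (real (block_level_edges (R m d) l)) (2 ^ (d - 1) * real m ^ 2)) \<and>
        approx_eq eps (real (card (R m d))) (real d * 2 ^ (d - 1) * real m ^ 2) \<and>
        (\<forall>x\<in>cube d. \<forall>y\<in>cube d. \<forall>P Q. x \<noteq> y \<longrightarrow> P \<subseteq> block m x \<longrightarrow> Q \<subseteq> block m y \<longrightarrow>
            real (card P) \<ge> real m powr (2/3) \<longrightarrow> real (card Q) \<ge> real m powr (2/3) \<longrightarrow>
            real (edges_between (R m d) P Q)
              \<le> (1 + eps) * 2 powr (real (delta x y) - real d) * real (card P) * real (card Q)))"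

end

theory Submission
  imports Defs "HOL-Analysis.Convex" "HOL-Library.FuncSet"
begin

(* Let G be an F-free subgraph of R(m, d). A regularity lemma refines the blocks B_x into parts
   such that almost all pairs of parts are regular. For a transversal c, choosing the part of one
   vertex in each block, the cluster graph joins x and y when the chosen parts are large and form
   a regular pair of density at least theta. An ordered copy of F in a cluster graph lifts to G by
   the counting lemma, because the blocks are ordered like the cube; so every cluster graph has
   weighted level density below alpha + eps. Averaging over all transversals bounds the number of
   good pairs of parts, a level-l pair weighted by 1 / tau(l, d). By property (ii), G has at most
   (1 + eps) 2^(l - d) |P| |Q| = (1 + eps) 2^d / (2 tau(l, d)) |P| |Q| edges inside a good level-l
   pair P, Q, so the two weightings match. The remaining edges of G lie inside blocks, in small
   parts or in irregular or sparse pairs, and are few by property (i) and the choice of the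
   parameters. Hence e(G) <= (alpha + 20 eps) e(R). *)

section \<open>Energy increment and a regularity lemma\<close>

text \<open>A partition of \<open>V\<close> is encoded by the map sending each element to its part.\<close>

definition partition_map :: "'a set \<Rightarrow> ('a \<Rightarrow> 'a set) \<Rightarrow> bool" where
  "partition_map V p \<longleftrightarrow> (\<forall>a\<in>V. a \<in> p a \<and> p a \<subseteq> V \<and> (\<forall>b\<in>p a. p b = p a))"

lemma partition_map_memD: "partition_map V p \<Longrightarrow> a \<in> V \<Longrightarrow> a \<in> p a"
  and partition_map_subsetD: "partition_map V p \<Longrightarrow> a \<in> V \<Longrightarrow> p a \<subseteq> V"
  and partition_map_eqD: "partition_map V p \<Longrightarrow> a \<in> V \<Longrightarrow> b \<in> p a \<Longrightarrow> p b = p a"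
  unfolding partition_map_def by blast+

lemma partition_map_mem_iff:
  "partition_map V p \<Longrightarrow> a \<in> V \<Longrightarrow> b \<in> V \<Longrightarrow> b \<in> p a \<longleftrightarrow> p a = p b"
  by (metis partition_map_eqD partition_map_memD)

lemma partition_map_finite_part:
  "partition_map V p \<Longrightarrow> finite V \<Longrightarrow> a \<in> V \<Longrightarrow> finite (p a)"
  by (meson finite_subset partition_map_subsetD)

lemma partition_map_card_part_pos:
  "partition_map V p \<Longrightarrow> finite V \<Longrightarrow> a \<in> V \<Longrightarrow> card (p a) > 0"
  by (metis card_gt_0_iff empty_iff partition_map_finite_part partition_map_memD)

lemma sum_eq_sum_part_averages:
  fixes g :: "'a \<Rightarrow> real"
  assumes p: "partition_map V p" and fin: "finite V"
  shows "(\<Sum>b\<in>V. g b) = (\<Sum>b\<in>V. (\<Sum>c\<in>p b. g c) / card (p b))"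
proof -
  have restrict: "(\<Sum>c\<in>V. if c \<in> p b then f c else 0) = sum f (p b)" if "b \<in> V" for b f
    using partition_map_subsetD[OF p that] fin by (simp add: sum.inter_restrict[symmetric] Int_absorb1)
  have "(\<Sum>b\<in>V. (\<Sum>c\<in>p b. g c) / card (p b)) = (\<Sum>b\<in>V. \<Sum>c\<in>V. if c \<in> p b then g c / card (p b) else 0)"
    by (intro sum.cong refl) (simp add: restrict sum_divide_distrib)
  also have "\<dots> = (\<Sum>c\<in>V. \<Sum>b\<in>V. if b \<in> p c then g c / card (p c) else 0)"
    by (subst sum.swap) (intro sum.cong refl if_cong, simp_all add: partition_map_mem_iff[OF p] eq_commute)
  also have "\<dots> = (\<Sum>c\<in>V. g c)"
    using partition_map_card_part_pos[OF p fin] by (intro sum.cong refl) (simp add: restrict)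
  finally show ?thesis ..
qed

lemma double_sum_eq_sum_part_averages:
  fixes g :: "'a \<Rightarrow> 'a \<Rightarrow> real"
  assumes p: "partition_map V p" and fin: "finite V"
  shows "(\<Sum>a\<in>V. \<Sum>b\<in>V. g a b) =
    (\<Sum>a\<in>V. \<Sum>b\<in>V. (\<Sum>a'\<in>p a. \<Sum>b'\<in>p b. g a' b') / (card (p a) * card (p b)))"
proof -
  have "(\<Sum>a\<in>V. \<Sum>b\<in>V. g a b) = (\<Sum>a\<in>V. \<Sum>b\<in>V. (\<Sum>b'\<in>p b. g a b') / card (p b))"
    by (intro sum.cong refl sum_eq_sum_part_averages[OF p fin])
  also have "\<dots> = (\<Sum>b\<in>V. \<Sum>a\<in>V. (\<Sum>b'\<in>p b. g a b') / card (p b))"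
    by (rule sum.swap)
  also have "\<dots> = (\<Sum>b\<in>V. \<Sum>a\<in>V. (\<Sum>a'\<in>p a. (\<Sum>b'\<in>p b. g a' b') / card (p b)) / card (p a))"
    by (intro sum.cong refl sum_eq_sum_part_averages[OF p fin])
  also have "\<dots> = (\<Sum>a\<in>V. \<Sum>b\<in>V. (\<Sum>a'\<in>p a. (\<Sum>b'\<in>p b. g a' b') / card (p b)) / card (p a))"
    by (rule sum.swap)
  also have "\<dots> = (\<Sum>a\<in>V. \<Sum>b\<in>V. (\<Sum>a'\<in>p a. \<Sum>b'\<in>p b. g a' b') / (card (p a) * card (p b)))"
    by (simp add: sum_divide_distrib[symmetric] divide_divide_eq_left mult.commute)
  finally show ?thesis .
qed

definition pair_weight :: "('a \<Rightarrow> 'a \<Rightarrow> real) \<Rightarrow> 'a set \<Rightarrow> 'a set \<Rightarrow> real" where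
  "pair_weight A X Y = (\<Sum>a\<in>X. \<Sum>b\<in>Y. A a b)"

definition pair_density :: "('a \<Rightarrow> 'a \<Rightarrow> real) \<Rightarrow> 'a set \<Rightarrow> 'a set \<Rightarrow> real" where
  "pair_density A X Y = pair_weight A X Y / (card X * card Y)"

definition part_density :: "('a \<Rightarrow> 'a \<Rightarrow> real) \<Rightarrow> ('a \<Rightarrow> 'a set) \<Rightarrow> 'a \<Rightarrow> 'a \<Rightarrow> real" where
  "part_density A p a b = pair_density A (p a) (p b)"

definition regular_pair :: "('a \<Rightarrow> 'a \<Rightarrow> real) \<Rightarrow> real \<Rightarrow> 'a set \<Rightarrow> 'a set \<Rightarrow> bool" where
  "regular_pair A e X Y \<longleftrightarrow> (\<forall>S\<subseteq>X. \<forall>T\<subseteq>Y.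
     \<bar>pair_weight A S T - pair_density A X Y * card S * card T\<bar> \<le> e * card X * card Y)"

definition irregular_count :: "('a \<Rightarrow> 'a \<Rightarrow> real) \<Rightarrow> real \<Rightarrow> 'a set \<Rightarrow> ('a \<Rightarrow> 'a set) \<Rightarrow> real" where
  "irregular_count A e V p = (\<Sum>a\<in>V. \<Sum>b\<in>V. of_bool (\<not> regular_pair A e (p a) (p b)))"

definition energy :: "('a \<Rightarrow> 'a \<Rightarrow> real) \<Rightarrow> 'a set \<Rightarrow> ('a \<Rightarrow> 'a set) \<Rightarrow> real" where
  "energy A V p = (\<Sum>a\<in>V. \<Sum>b\<in>V. (part_density A p a b)\<^sup>2)"

definition constant_on_parts :: "'a set \<Rightarrow> ('a \<Rightarrow> 'a set) \<Rightarrow> ('a \<Rightarrow> 'a \<Rightarrow> real) \<Rightarrow> bool" where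
  "constant_on_parts V p h \<longleftrightarrow>
     (\<forall>a\<in>V. \<forall>a'\<in>V. \<forall>b\<in>V. \<forall>b'\<in>V. p a = p a' \<longrightarrow> p b = p b' \<longrightarrow> h a b = h a' b')"

definition refine :: "('a \<Rightarrow> 'a set) \<Rightarrow> 'a set set \<Rightarrow> 'a \<Rightarrow> 'a set" where
  "refine p W a = {b \<in> p a. \<forall>w\<in>W. b \<in> w \<longleftrightarrow> a \<in> w}"

lemma constant_on_partsD:
  assumes "constant_on_parts V p h" and "a \<in> V" "a' \<in> V" "b \<in> V" "b' \<in> V"
    and "p a = p a'" "p b = p b'"
  shows "h a b = h a' b'"
  using assms(1)[unfolded constant_on_parts_def, rule_format, OF assms(2-7)] .

lemma pair_weight_commute:
  "(\<And>a b. A a b = A b a) \<Longrightarrow> pair_weight A X Y = pair_weight A Y X"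
  unfolding pair_weight_def by (subst sum.swap) simp

lemma pair_density_commute:
  "(\<And>a b. A a b = A b a) \<Longrightarrow> pair_density A X Y = pair_density A Y X"
  unfolding pair_density_def by (simp add: pair_weight_commute mult.commute)

lemma regular_pair_commute:
  assumes "\<And>a b. A a b = A b a"
  shows "regular_pair A e X Y \<longleftrightarrow> regular_pair A e Y X"
proof -
  have "regular_pair A e Y X" if "regular_pair A e X Y" for X Y
    unfolding regular_pair_def
  proof (intro allI impI)
    fix S T assume "S \<subseteq> Y" "T \<subseteq> X"
    then have "\<bar>pair_weight A T S - pair_density A X Y * card T * card S\<bar> \<le> e * card X * card Y"
      using that unfolding regular_pair_def by blast
    then show "\<bar>pair_weight A S T - pair_density A Y X * card S * card T\<bar> \<le> e * card Y * card X"
      by (simp add: pair_weight_commute[OF assms, where X = T and Y = S]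
          pair_density_commute[OF assms, where X = X and Y = Y] mult_ac)
  qed
  then show ?thesis by blast
qed

lemma pair_density_bounds:
  assumes A: "\<And>a b. 0 \<le> A a b \<and> A a b \<le> 1"
  shows "0 \<le> pair_density A X Y" and "pair_density A X Y \<le> 1"
proof -
  have "0 \<le> pair_weight A X Y" unfolding pair_weight_def using A by (intro sum_nonneg) auto
  then show "0 \<le> pair_density A X Y" unfolding pair_density_def by simp
  have "pair_weight A X Y \<le> (\<Sum>a\<in>X. \<Sum>b\<in>Y. 1)" unfolding pair_weight_def using A by (intro sum_mono) auto
  then have "pair_weight A X Y \<le> real (card X) * card Y" by simp
  then show "pair_density A X Y \<le> 1" unfolding pair_density_def
    by (cases "card X * card Y = 0") (auto simp: divide_le_eq)
qed

lemma sum_mult_constant_on_parts: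
  assumes p: "partition_map V p" and fin: "finite V" and h: "constant_on_parts V p h"
  shows "(\<Sum>a\<in>V. \<Sum>b\<in>V. A a b * h a b) = (\<Sum>a\<in>V. \<Sum>b\<in>V. part_density A p a b * h a b)"
proof -
  have block_sum: "(\<Sum>a'\<in>p a. \<Sum>b'\<in>p b. A a' b' * h a' b') = pair_weight A (p a) (p b) * h a b"
    if a: "a \<in> V" and b: "b \<in> V" for a b
  proof -
    have "(\<Sum>a'\<in>p a. \<Sum>b'\<in>p b. A a' b' * h a' b') = (\<Sum>a'\<in>p a. \<Sum>b'\<in>p b. A a' b' * h a b)"
    proof (intro sum.cong refl)
      fix a' b' assume a': "a' \<in> p a" and b': "b' \<in> p b"
      have "h a b = h a' b'"
      proof (rule constant_on_partsD[OF h a _ b])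
        show "a' \<in> V" "b' \<in> V"
          using a' b' partition_map_subsetD[OF p a] partition_map_subsetD[OF p b] by auto
        show "p a = p a'" "p b = p b'"
          using partition_map_eqD[OF p a a'] partition_map_eqD[OF p b b'] by simp_all
      qed
      then show "A a' b' * h a' b' = A a' b' * h a b" by simp
    qed
    then show ?thesis unfolding pair_weight_def by (simp add: sum_distrib_right)
  qed
  have "(\<Sum>a\<in>V. \<Sum>b\<in>V. A a b * h a b) =
      (\<Sum>a\<in>V. \<Sum>b\<in>V. (\<Sum>a'\<in>p a. \<Sum>b'\<in>p b. A a' b' * h a' b') / (card (p a) * card (p b)))"
    by (rule double_sum_eq_sum_part_averages[OF p fin])
  also have "\<dots> = (\<Sum>a\<in>V. \<Sum>b\<in>V. part_density A p a b * h a b)"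
    by (intro sum.cong refl) (simp add: block_sum part_density_def pair_density_def)
  finally show ?thesis .
qed

lemma refine_subset: "refine p W a \<subseteq> p a"
  unfolding refine_def by blast

lemma partition_map_refine:
  assumes p: "partition_map V p"
  shows "partition_map V (refine p W)"
  unfolding partition_map_def
proof (intro ballI conjI)
  fix a assume a: "a \<in> V"
  show "a \<in> refine p W a" using partition_map_memD[OF p a] unfolding refine_def by simp
  show "refine p W a \<subseteq> V"
    using partition_map_subsetD[OF p a] refine_subset[of p W a] by (rule order_trans[rotated])
  fix b assume "b \<in> refine p W a"
  then have b: "b \<in> p a" and bw: "\<forall>w\<in>W. b \<in> w \<longleftrightarrow> a \<in> w" unfolding refine_def by simp_all
  have "p b = p a" using b by (rule partition_map_eqD[OF p a])
  then show "refine p W b = refine p W a" using bw unfolding refine_def by auto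
qed

lemma refine_eqD:
  assumes p: "partition_map V p" and a: "a \<in> V" and a': "a' \<in> V"
    and eq: "refine p W a = refine p W a'"
  shows "p a = p a'" and "w \<in> W \<Longrightarrow> a \<in> w \<longleftrightarrow> a' \<in> w"
proof -
  have a'a: "a' \<in> refine p W a"
    using eq partition_map_memD[OF partition_map_refine[OF p] a'] by simp
  then have "a' \<in> p a" using refine_subset[of p W a] by (rule subsetD[rotated])
  then show "p a = p a'" using partition_map_eqD[OF p a] by simp
  show "w \<in> W \<Longrightarrow> a \<in> w \<longleftrightarrow> a' \<in> w" using a'a unfolding refine_def by simp
qed

lemma constant_on_parts_part_density: "constant_on_parts V p (part_density A p)"
  unfolding constant_on_parts_def part_density_def by simp

lemma constant_on_parts_refine:
  assumes p: "partition_map V p" and h: "constant_on_parts V p h"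
  shows "constant_on_parts V (refine p W) h"
  unfolding constant_on_parts_def
proof (intro ballI impI)
  fix a a' b b' assume a: "a \<in> V" "a' \<in> V" and b: "b \<in> V" "b' \<in> V"
    and eq: "refine p W a = refine p W a'" "refine p W b = refine p W b'"
  show "h a b = h a' b'"
    using constant_on_partsD[OF h a b refine_eqD(1)[OF p a eq(1)] refine_eqD(1)[OF p b eq(2)]] .
qed

lemma constant_on_parts_refine_rectangle:
  assumes p: "partition_map V p" and S: "S \<in> W" and T: "T \<in> W"
  shows "constant_on_parts V (refine p W) (\<lambda>a b. of_bool (a \<in> S) * of_bool (b \<in> T))"
  unfolding constant_on_parts_def
proof (intro ballI impI)
  fix a a' b b' assume a: "a \<in> V" "a' \<in> V" and b: "b \<in> V" "b' \<in> V"
    and eq: "refine p W a = refine p W a'" "refine p W b = refine p W b'"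
  have "a \<in> S \<longleftrightarrow> a' \<in> S" by (rule refine_eqD(2)[OF p a eq(1) S])
  moreover have "b \<in> T \<longleftrightarrow> b' \<in> T" by (rule refine_eqD(2)[OF p b eq(2) T])
  ultimately show "of_bool (a \<in> S) * of_bool (b \<in> T) = (of_bool (a' \<in> S) * of_bool (b' \<in> T) :: real)"
    by simp
qed

lemma card_refine_image_le:
  assumes fin: "finite V" and W: "finite W"
  shows "card (refine p W ` V) \<le> card (p ` V) * 2 ^ card W"
proof -
  define F where "F = (\<lambda>(P, X). {b \<in> P. \<forall>w\<in>W. b \<in> w \<longleftrightarrow> w \<in> X})"
  have "refine p W a = F (p a, {w \<in> W. a \<in> w})" for a
    unfolding F_def refine_def by auto
  then have "refine p W ` V \<subseteq> F ` (p ` V \<times> Pow W)" by auto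
  then have "card (refine p W ` V) \<le> card (F ` (p ` V \<times> Pow W))"
    by (intro card_mono) (use fin W in auto)
  also have "\<dots> \<le> card (p ` V \<times> Pow W)" by (rule card_image_le) (use fin W in auto)
  also have "\<dots> = card (p ` V) * 2 ^ card W" by (simp add: card_cartesian_product card_Pow W)
  finally show ?thesis .
qed

lemma sum_indicator_rectangle:
  fixes g :: "'a \<Rightarrow> 'a \<Rightarrow> real"
  assumes fin: "finite V" and S: "S \<subseteq> V" and T: "T \<subseteq> V"
  shows "(\<Sum>a\<in>V. \<Sum>b\<in>V. g a b * (of_bool (a \<in> S) * of_bool (b \<in> T))) = (\<Sum>a\<in>S. \<Sum>b\<in>T. g a b)"
proof -
  have restrict: "(\<Sum>b\<in>V. of_bool (b \<in> X) * f b) = sum f X" if "X \<subseteq> V" for X and f :: "'a \<Rightarrow> real"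
  proof -
    have "V \<inter> {b. b \<in> X} = X" using that by blast
    then show ?thesis using fin by simp
  qed
  have "(\<Sum>a\<in>V. \<Sum>b\<in>V. g a b * (of_bool (a \<in> S) * of_bool (b \<in> T)))
      = (\<Sum>a\<in>V. of_bool (a \<in> S) * (\<Sum>b\<in>V. of_bool (b \<in> T) * g a b))"
    by (simp add: sum_distrib_left mult_ac)
  also have "\<dots> = (\<Sum>a\<in>S. \<Sum>b\<in>T. g a b)"
    by (simp only: restrict[OF T] restrict[OF S])
  finally show ?thesis .
qed

text \<open>Pythagoras: the coarse step function is the average of the fine one over the coarse parts.\<close>

lemma energy_refine_eq:
  assumes p: "partition_map V p" and fin: "finite V"
  shows "energy A V (refine p W) - energy A V p =
    (\<Sum>a\<in>V. \<Sum>b\<in>V. (part_density A (refine p W) a b - part_density A p a b)\<^sup>2)"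
proof -
  let ?q = "part_density A (refine p W)" and ?p = "part_density A p"
  have "(\<Sum>a\<in>V. \<Sum>b\<in>V. ?q a b * ?p a b) = (\<Sum>a\<in>V. \<Sum>b\<in>V. A a b * ?p a b)"
    by (rule sum_mult_constant_on_parts[OF partition_map_refine[OF p] fin
          constant_on_parts_refine[OF p constant_on_parts_part_density], symmetric])
  also have "\<dots> = (\<Sum>a\<in>V. \<Sum>b\<in>V. ?p a b * ?p a b)"
    by (rule sum_mult_constant_on_parts[OF p fin constant_on_parts_part_density])
  finally have cross: "(\<Sum>a\<in>V. \<Sum>b\<in>V. ?q a b * ?p a b) = energy A V p"
    unfolding energy_def by (simp add: power2_eq_square)
  have "(?q a b - ?p a b)\<^sup>2 = (?q a b)\<^sup>2 - 2 * (?q a b * ?p a b) + (?p a b)\<^sup>2" for a b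
    by (simp add: power2_diff)
  then have "(\<Sum>a\<in>V. \<Sum>b\<in>V. (?q a b - ?p a b)\<^sup>2)
      = energy A V (refine p W) - 2 * (\<Sum>a\<in>V. \<Sum>b\<in>V. ?q a b * ?p a b) + energy A V p"
    unfolding energy_def by (simp add: sum.distrib sum_subtractf sum_distrib_left)
  then show ?thesis using cross by simp
qed

lemma discrepancy_eq_sum_refine_diff:
  assumes p: "partition_map V p" and fin: "finite V" and a0: "a0 \<in> V" and b0: "b0 \<in> V"
    and S: "S \<subseteq> p a0" "S \<in> W" and T: "T \<subseteq> p b0" "T \<in> W"
  shows "pair_weight A S T - pair_density A (p a0) (p b0) * card S * card T =
    (\<Sum>a\<in>S. \<Sum>b\<in>T. part_density A (refine p W) a b - part_density A p a b)"
proof -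
  define h where "h a b = (of_bool (a \<in> S) * of_bool (b \<in> T) :: real)" for a b
  have SV: "S \<subseteq> V" using S(1) partition_map_subsetD[OF p a0] by (rule order_trans)
  have TV: "T \<subseteq> V" using T(1) partition_map_subsetD[OF p b0] by (rule order_trans)
  have "pair_weight A S T = (\<Sum>a\<in>V. \<Sum>b\<in>V. A a b * h a b)"
    unfolding h_def pair_weight_def by (rule sum_indicator_rectangle[OF fin SV TV, symmetric])
  also have "\<dots> = (\<Sum>a\<in>V. \<Sum>b\<in>V. part_density A (refine p W) a b * h a b)"
    unfolding h_def
    by (rule sum_mult_constant_on_parts[OF partition_map_refine[OF p] fin
          constant_on_parts_refine_rectangle[OF p S(2) T(2)]])
  also have "\<dots> = (\<Sum>a\<in>S. \<Sum>b\<in>T. part_density A (refine p W) a b)"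
    unfolding h_def by (rule sum_indicator_rectangle[OF fin SV TV])
  finally have weight: "pair_weight A S T = \<dots>" .
  have "part_density A p a b = pair_density A (p a0) (p b0)" if "a \<in> S" "b \<in> T" for a b
    using partition_map_eqD[OF p a0 subsetD[OF S(1) that(1)]]
      partition_map_eqD[OF p b0 subsetD[OF T(1) that(2)]]
    unfolding part_density_def by simp
  then have "(\<Sum>a\<in>S. \<Sum>b\<in>T. part_density A p a b) = pair_density A (p a0) (p b0) * card S * card T"
    by simp
  with weight show ?thesis by (simp add: sum_subtractf)
qed

lemma sum_rectangle_sq_le:
  fixes f :: "'a \<Rightarrow> 'b \<Rightarrow> real"
  shows "(\<Sum>a\<in>S. \<Sum>b\<in>T. f a b)\<^sup>2 \<le> card S * card T * (\<Sum>a\<in>S. \<Sum>b\<in>T. (f a b)\<^sup>2)"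
  using sum_squared_le_sum_of_squares[of "\<lambda>x. f (fst x) (snd x)" "S \<times> T"]
  by (simp add: sum.cartesian_product case_prod_beta card_cartesian_product mult_ac)

lemma sum_sq_refine_diff_ge:
  fixes e :: real
  assumes p: "partition_map V p" and fin: "finite V" and a0: "a0 \<in> V" and b0: "b0 \<in> V"
    and S: "S \<subseteq> p a0" "S \<in> W" and T: "T \<subseteq> p b0" "T \<in> W" and "e \<ge> 0"
    and big: "\<bar>pair_weight A S T - pair_density A (p a0) (p b0) * card S * card T\<bar>
                > e * card (p a0) * card (p b0)"
  shows "(\<Sum>a\<in>p a0. \<Sum>b\<in>p b0. (part_density A (refine p W) a b - part_density A p a b)\<^sup>2)
           \<ge> e\<^sup>2 * card (p a0) * card (p b0)"
proof -
  define f where "f a b = part_density A (refine p W) a b - part_density A p a b" for a b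
  define c where "c = real (card (p a0)) * card (p b0)"
  define Y where "Y = (\<Sum>a\<in>p a0. \<Sum>b\<in>p b0. (f a b)\<^sup>2)"
  have fin0: "finite (p a0)" "finite (p b0)"
    using partition_map_finite_part[OF p fin] a0 b0 by auto
  have "c > 0" unfolding c_def using partition_map_card_part_pos[OF p fin] a0 b0 by simp
  have "card S \<le> card (p a0)" "card T \<le> card (p b0)"
    using card_mono[OF fin0(1) S(1)] card_mono[OF fin0(2) T(1)] .
  then have cST: "card S * card T \<le> c" unfolding c_def by (simp add: mult_mono)
  have sub: "(\<Sum>a\<in>S. \<Sum>b\<in>T. (f a b)\<^sup>2) \<le> Y"
  proof -
    have "(\<Sum>a\<in>S. \<Sum>b\<in>T. (f a b)\<^sup>2) \<le> (\<Sum>a\<in>S. \<Sum>b\<in>p b0. (f a b)\<^sup>2)"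
      by (intro sum_mono sum_mono2[OF fin0(2) T(1)]) auto
    also have "\<dots> \<le> Y"
      unfolding Y_def by (intro sum_mono2[OF fin0(1) S(1)] sum_nonneg) auto
    finally show ?thesis .
  qed
  have "e * c < \<bar>\<Sum>a\<in>S. \<Sum>b\<in>T. f a b\<bar>"
    using big unfolding discrepancy_eq_sum_refine_diff[OF p fin a0 b0 S T] f_def c_def
    by (simp add: mult.assoc)
  then have "(e * c)\<^sup>2 < (\<Sum>a\<in>S. \<Sum>b\<in>T. f a b)\<^sup>2"
    using \<open>e \<ge> 0\<close> \<open>c > 0\<close>
    by (metis power2_abs power_strict_mono zero_le_mult_iff zero_less_numeral less_imp_le)
  also have "\<dots> \<le> card S * card T * (\<Sum>a\<in>S. \<Sum>b\<in>T. (f a b)\<^sup>2)"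
    by (rule sum_rectangle_sq_le)
  also have "\<dots> \<le> c * Y"
    using cST sub \<open>c > 0\<close> by (intro mult_mono) (auto intro!: sum_nonneg)
  finally have "c * (e\<^sup>2 * c) < c * Y" by (simp add: power_mult_distrib power2_eq_square mult_ac)
  then have "e\<^sup>2 * c < Y" using \<open>c > 0\<close> by simp
  then show ?thesis unfolding Y_def f_def c_def by (simp add: mult.assoc)
qed

lemma energy_increment:
  fixes e :: real
  assumes p: "partition_map V p" and fin: "finite V" and "e \<ge> 0"
    and witness: "\<And>a b. a \<in> V \<Longrightarrow> b \<in> V \<Longrightarrow> \<not> regular_pair A e (p a) (p b) \<Longrightarrow>
      \<exists>S\<in>W. \<exists>T\<in>W. S \<subseteq> p a \<and> T \<subseteq> p b \<and>
        \<bar>pair_weight A S T - pair_density A (p a) (p b) * card S * card T\<bar> > e * card (p a) * card (p b)"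
  shows "energy A V (refine p W) \<ge> energy A V p + e\<^sup>2 * irregular_count A e V p"
proof -
  define f where "f a b = (part_density A (refine p W) a b - part_density A p a b)\<^sup>2" for a b
  define irr where "irr a b = (of_bool (\<not> regular_pair A e (p a) (p b)) :: real)" for a b
  have "constant_on_parts V p irr" unfolding constant_on_parts_def irr_def by simp
  have "e\<^sup>2 * irregular_count A e V p = (\<Sum>a\<in>V. \<Sum>b\<in>V. e\<^sup>2 * irr a b)"
    unfolding irregular_count_def irr_def by (simp add: sum_distrib_left)
  also have "\<dots> \<le> (\<Sum>a\<in>V. \<Sum>b\<in>V. part_density f p a b * irr a b)"
  proof (intro sum_mono)
    fix a b assume a: "a \<in> V" and b: "b \<in> V"
    show "e\<^sup>2 * irr a b \<le> part_density f p a b * irr a b"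
    proof (cases "regular_pair A e (p a) (p b)")
      case False
      then obtain S T where "S \<in> W" "S \<subseteq> p a" "T \<in> W" "T \<subseteq> p b"
        and "\<bar>pair_weight A S T - pair_density A (p a) (p b) * card S * card T\<bar> > e * card (p a) * card (p b)"
        using witness[OF a b] by blast
      then have "pair_weight f (p a) (p b) \<ge> e\<^sup>2 * card (p a) * card (p b)"
        unfolding f_def by (subst pair_weight_def) (intro sum_sq_refine_diff_ge[OF p fin a b _ _ _ _ \<open>e \<ge> 0\<close>])
      then show ?thesis
        using False partition_map_card_part_pos[OF p fin a] partition_map_card_part_pos[OF p fin b]
        unfolding irr_def part_density_def pair_density_def by (simp add: pos_le_divide_eq mult.assoc)
    qed (simp add: irr_def)
  qed
  also have "\<dots> = (\<Sum>a\<in>V. \<Sum>b\<in>V. f a b * irr a b)"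
    by (rule sum_mult_constant_on_parts[OF p fin \<open>constant_on_parts V p irr\<close>, symmetric])
  also have "\<dots> \<le> (\<Sum>a\<in>V. \<Sum>b\<in>V. f a b)"
    unfolding irr_def f_def by (intro sum_mono) auto
  also have "\<dots> = energy A V (refine p W) - energy A V p"
    unfolding f_def by (rule energy_refine_eq[OF p fin, symmetric])
  finally show ?thesis by simp
qed

lemma energy_le_card_sq:
  assumes "\<And>a b. 0 \<le> A a b \<and> A a b \<le> 1"
  shows "energy A V p \<le> (card V)\<^sup>2"
proof -
  have "energy A V p \<le> (\<Sum>a\<in>V. \<Sum>b\<in>V. 1)"
    unfolding energy_def part_density_def
    using pair_density_bounds[of A, OF assms] by (intro sum_mono) (simp add: power_le_one)
  then show ?thesis by (simp add: power2_eq_square)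
qed

lemma irregular_pairs_witnessed:
  assumes "finite V"
  obtains W where "finite W" and "card W \<le> 2 * (card (p ` V))\<^sup>2"
    and "\<And>a b. a \<in> V \<Longrightarrow> b \<in> V \<Longrightarrow> \<not> regular_pair A e (p a) (p b) \<Longrightarrow>
      \<exists>S\<in>W. \<exists>T\<in>W. S \<subseteq> p a \<and> T \<subseteq> p b \<and>
        \<bar>pair_weight A S T - pair_density A (p a) (p b) * card S * card T\<bar> > e * card (p a) * card (p b)"
proof -
  define I where "I = {XY \<in> p ` V \<times> p ` V. \<not> regular_pair A e (fst XY) (snd XY)}"
  define wit where "wit XY ST \<longleftrightarrow> fst ST \<subseteq> fst XY \<and> snd ST \<subseteq> snd XY \<and>
      \<bar>pair_weight A (fst ST) (snd ST) - pair_density A (fst XY) (snd XY) * card (fst ST) * card (snd ST)\<bar>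
        > e * card (fst XY) * card (snd XY)" for XY ST
  have "\<forall>XY\<in>I. \<exists>ST. wit XY ST"
    unfolding I_def wit_def regular_pair_def by (auto simp: not_le)
  from bchoice[OF this] obtain w where w: "\<And>XY. XY \<in> I \<Longrightarrow> wit XY (w XY)" by blast
  define W where "W = fst ` w ` I \<union> snd ` w ` I"
  have finI: "finite I" unfolding I_def using assms by simp
  have "card I \<le> card (p ` V \<times> p ` V)" unfolding I_def using assms by (intro card_mono) auto
  then have "card I \<le> (card (p ` V))\<^sup>2" by (simp add: card_cartesian_product power2_eq_square)
  moreover have "card W \<le> 2 * card I"
  proof -
    have "card W \<le> card (fst ` w ` I) + card (snd ` w ` I)" unfolding W_def by (rule card_Un_le)
    also have "\<dots> \<le> card I + card I"
      by (intro add_mono order_trans[OF card_image_le card_image_le] finI finite_imageI)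
    finally show ?thesis by simp
  qed
  moreover have "\<exists>S\<in>W. \<exists>T\<in>W. S \<subseteq> p a \<and> T \<subseteq> p b \<and>
      \<bar>pair_weight A S T - pair_density A (p a) (p b) * card S * card T\<bar> > e * card (p a) * card (p b)"
    if "a \<in> V" "b \<in> V" "\<not> regular_pair A e (p a) (p b)" for a b
  proof -
    have "(p a, p b) \<in> I" unfolding I_def using that by auto
    with w[OF this] show ?thesis unfolding W_def wit_def by (intro bexI) auto
  qed
  moreover have "finite W" unfolding W_def using finI by simp
  ultimately show ?thesis using that by simp
qed

fun tower :: "nat \<Rightarrow> nat \<Rightarrow> nat" where
  "tower t0 0 = t0"
| "tower t0 (Suc n) = tower t0 n * 2 ^ (2 * (tower t0 n)\<^sup>2)"

lemma energy_increment_step: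
  fixes e :: real
  assumes fin: "finite V" and p: "partition_map V p" and "e \<ge> 0"
    and irregular: "irregular_count A e V p > e * (card V)\<^sup>2"
  obtains q where "partition_map V q" and "\<forall>a\<in>V. q a \<subseteq> p a"
    and "card (q ` V) \<le> card (p ` V) * 2 ^ (2 * (card (p ` V))\<^sup>2)"
    and "energy A V q \<ge> energy A V p + e ^ 3 * (card V)\<^sup>2"
proof -
  obtain W where W: "finite W" "card W \<le> 2 * (card (p ` V))\<^sup>2"
    and witness: "\<And>a b. a \<in> V \<Longrightarrow> b \<in> V \<Longrightarrow> \<not> regular_pair A e (p a) (p b) \<Longrightarrow>
      \<exists>S\<in>W. \<exists>T\<in>W. S \<subseteq> p a \<and> T \<subseteq> p b \<and>
        \<bar>pair_weight A S T - pair_density A (p a) (p b) * card S * card T\<bar> > e * card (p a) * card (p b)"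
    using irregular_pairs_witnessed[OF fin, where p = p and A = A and e = e] by metis
  have "card (refine p W ` V) \<le> card (p ` V) * 2 ^ card W"
    by (rule card_refine_image_le[OF fin W(1)])
  also have "\<dots> \<le> card (p ` V) * 2 ^ (2 * (card (p ` V))\<^sup>2)"
    using W(2) by (intro mult_le_mono2 power_increasing) auto
  finally have card: "card (refine p W ` V) \<le> card (p ` V) * 2 ^ (2 * (card (p ` V))\<^sup>2)" .
  have "energy A V (refine p W) \<ge> energy A V p + e\<^sup>2 * irregular_count A e V p"
    using \<open>e \<ge> 0\<close> by (intro energy_increment[OF p fin _ witness]) auto
  moreover have "e\<^sup>2 * irregular_count A e V p \<ge> e ^ 3 * (card V)\<^sup>2"
    using mult_left_mono[OF less_imp_le[OF irregular], of "e\<^sup>2"]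
    by (simp add: power2_eq_square power3_eq_cube mult_ac)
  ultimately have energy: "energy A V (refine p W) \<ge> energy A V p + e ^ 3 * (card V)\<^sup>2" by linarith
  have "\<forall>a\<in>V. refine p W a \<subseteq> p a" using refine_subset[of p W] by blast
  then show ?thesis by (rule that[OF partition_map_refine[OF p] _ card energy])
qed

lemma regular_or_energetic_refinement:
  fixes e :: real
  assumes fin: "finite V" and p0: "partition_map V p0" and t0: "card (p0 ` V) \<le> t0" and e: "e > 0"
  shows "\<exists>p. partition_map V p \<and> (\<forall>a\<in>V. p a \<subseteq> p0 a) \<and> card (p ` V) \<le> tower t0 n \<and>
    (irregular_count A e V p \<le> e * (card V)\<^sup>2 \<or> energy A V p \<ge> n * e ^ 3 * (card V)\<^sup>2)"
proof (induction n)
  case 0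
  have "energy A V p0 \<ge> 0" unfolding energy_def by (intro sum_nonneg) auto
  then show ?case using p0 t0 by auto
next
  case (Suc n)
  then obtain p where p: "partition_map V p" and sub: "\<forall>a\<in>V. p a \<subseteq> p0 a"
    and card_p: "card (p ` V) \<le> tower t0 n"
    and alt: "irregular_count A e V p \<le> e * (card V)\<^sup>2 \<or> energy A V p \<ge> n * e ^ 3 * (card V)\<^sup>2"
    by blast
  have tower_Suc: "card (p ` V) * 2 ^ (2 * (card (p ` V))\<^sup>2) \<le> tower t0 (Suc n)"
    using card_p by (simp add: mult_le_mono power_increasing power_mono)
  show ?case
  proof (cases "irregular_count A e V p \<le> e * (card V)\<^sup>2")
    case True
    have "card (p ` V) \<le> card (p ` V) * 2 ^ (2 * (card (p ` V))\<^sup>2)" by simp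
    with tower_Suc have "card (p ` V) \<le> tower t0 (Suc n)" by (rule le_trans[rotated])
    with True show ?thesis using p sub by blast
  next
    case False
    then have "irregular_count A e V p > e * (card V)\<^sup>2" by simp
    then obtain q where q: "partition_map V q" "\<forall>a\<in>V. q a \<subseteq> p a"
      "card (q ` V) \<le> card (p ` V) * 2 ^ (2 * (card (p ` V))\<^sup>2)"
      "energy A V q \<ge> energy A V p + e ^ 3 * (card V)\<^sup>2"
      using energy_increment_step[OF fin p less_imp_le[OF e]] by metis
    have "energy A V q \<ge> Suc n * e ^ 3 * (card V)\<^sup>2"
      using q(4) False alt by (simp add: algebra_simps)
    moreover have "\<forall>a\<in>V. q a \<subseteq> p0 a" using q(2) sub by blast
    moreover have "card (q ` V) \<le> tower t0 (Suc n)" using q(3) tower_Suc by (rule le_trans)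
    ultimately show ?thesis using q(1) by blast
  qed
qed

lemma regular_refinement:
  fixes e :: real
  assumes fin: "finite V" and p0: "partition_map V p0" and t0: "card (p0 ` V) \<le> t0" and e: "e > 0"
    and A: "\<And>a b. 0 \<le> A a b \<and> A a b \<le> 1"
  shows "\<exists>p. partition_map V p \<and> (\<forall>a\<in>V. p a \<subseteq> p0 a) \<and>
    card (p ` V) \<le> tower t0 (nat \<lceil>1 / e ^ 3\<rceil> + 1) \<and> irregular_count A e V p \<le> e * (card V)\<^sup>2"
proof -
  define n where "n = nat \<lceil>1 / e ^ 3\<rceil> + 1"
  obtain p where p: "partition_map V p" "\<forall>a\<in>V. p a \<subseteq> p0 a" "card (p ` V) \<le> tower t0 n"
    and alt: "irregular_count A e V p \<le> e * (card V)\<^sup>2 \<or> energy A V p \<ge> n * e ^ 3 * (card V)\<^sup>2"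
    using regular_or_energetic_refinement[OF fin p0 t0 e] by blast
  have "energy A V p < n * e ^ 3 * (card V)\<^sup>2" if "V \<noteq> {}"
  proof -
    have "1 / e ^ 3 < n" unfolding n_def by linarith
    then have "1 < n * e ^ 3" using e by (simp add: field_simps)
    then have "(card V)\<^sup>2 < n * e ^ 3 * (card V)\<^sup>2" using that fin by simp
    then show ?thesis using energy_le_card_sq[OF A] by (rule le_less_trans[rotated])
  qed
  then have "irregular_count A e V p \<le> e * (card V)\<^sup>2"
    using alt by (cases "V = {}") (auto simp: irregular_count_def)
  then show ?thesis using p unfolding n_def by blast
qed

section \<open>A counting lemma\<close>

lemma sum_PiE_remove:
  fixes F :: "('i \<Rightarrow> 'a) \<Rightarrow> real"
  assumes "i \<in> I" and "finite I"
  shows "(\<Sum>v\<in>PiE I Q. F v) = (\<Sum>a\<in>Q i. \<Sum>w\<in>PiE (I - {i}) Q. F (w(i := a)))"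
proof -
  have "PiE I Q = (\<lambda>(y, g). g(i := y)) ` (Q i \<times> PiE (I - {i}) Q)"
    using PiE_insert_eq[of i "I - {i}" Q] assms(1) by (simp add: insert_absorb)
  then have "(\<Sum>v\<in>PiE I Q. F v) = (\<Sum>x\<in>Q i \<times> PiE (I - {i}) Q. F ((\<lambda>(y, g). g(i := y)) x))"
    by (simp add: sum.reindex inj_combinator)
  then show ?thesis by (simp add: sum.cartesian_product split_beta)
qed

lemma sum_PiE_remove2:
  fixes F :: "('i \<Rightarrow> 'a) \<Rightarrow> real"
  assumes fin: "finite I" and i: "i \<in> I" and j: "j \<in> I" "i \<noteq> j"
  shows "(\<Sum>v\<in>PiE I Q. F v) = (\<Sum>u\<in>PiE (I - {i} - {j}) Q. \<Sum>a\<in>Q i. \<Sum>b\<in>Q j. F (u(j := b, i := a)))"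
proof -
  have "(\<Sum>v\<in>PiE I Q. F v) = (\<Sum>a\<in>Q i. \<Sum>w\<in>PiE (I - {i}) Q. F (w(i := a)))"
    by (rule sum_PiE_remove[OF i fin])
  also have "\<dots> = (\<Sum>a\<in>Q i. \<Sum>b\<in>Q j. \<Sum>u\<in>PiE (I - {i} - {j}) Q. F (u(j := b, i := a)))"
    using j fin by (intro sum.cong refl sum_PiE_remove) auto
  also have "\<dots> = (\<Sum>a\<in>Q i. \<Sum>u\<in>PiE (I - {i} - {j}) Q. \<Sum>b\<in>Q j. F (u(j := b, i := a)))"
    by (intro sum.cong refl sum.swap)
  also have "\<dots> = (\<Sum>u\<in>PiE (I - {i} - {j}) Q. \<Sum>a\<in>Q i. \<Sum>b\<in>Q j. F (u(j := b, i := a)))"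
    by (rule sum.swap)
  finally show ?thesis .
qed

lemma sum_mult_unit_interval_le:
  fixes f h :: "'a \<Rightarrow> real"
  assumes "finite X" and "\<And>x. x \<in> X \<Longrightarrow> 0 \<le> f x \<and> f x \<le> 1"
  shows "(\<Sum>x\<in>X. f x * h x) \<le> (\<Sum>x\<in>{x\<in>X. h x > 0}. h x)"
    and "(\<Sum>x\<in>X. f x * h x) \<ge> (\<Sum>x\<in>{x\<in>X. h x < 0}. h x)"
proof -
  have "f x * h x \<le> (if h x > 0 then h x else 0)" if "x \<in> X" for x
    using assms(2)[OF that] by (auto simp: mult_left_le_one_le mult_nonneg_nonpos)
  then have "(\<Sum>x\<in>X. f x * h x) \<le> (\<Sum>x\<in>X. if h x > 0 then h x else 0)" by (rule sum_mono)
  then show "(\<Sum>x\<in>X. f x * h x) \<le> (\<Sum>x\<in>{x\<in>X. h x > 0}. h x)"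
    using assms(1) by (simp add: sum.inter_filter)
  have "(if h x < 0 then h x else 0) \<le> f x * h x" if "x \<in> X" for x
    using assms(2)[OF that] by (auto simp: mult_le_cancel_right2 mult_nonneg_nonneg)
  then have "(\<Sum>x\<in>X. if h x < 0 then h x else 0) \<le> (\<Sum>x\<in>X. f x * h x)" by (rule sum_mono)
  then show "(\<Sum>x\<in>X. f x * h x) \<ge> (\<Sum>x\<in>{x\<in>X. h x < 0}. h x)"
    using assms(1) by (simp add: sum.inter_filter)
qed

lemma bilinear_le_rectangle_bound:
  fixes D :: "'a \<Rightarrow> 'b \<Rightarrow> real"
  assumes fX: "finite X" and fY: "finite Y"
    and f: "\<And>x. x \<in> X \<Longrightarrow> 0 \<le> f x \<and> f x \<le> 1"
    and g: "\<And>y. y \<in> Y \<Longrightarrow> 0 \<le> g y \<and> g y \<le> 1"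
    and D: "\<And>S T. S \<subseteq> X \<Longrightarrow> T \<subseteq> Y \<Longrightarrow> \<bar>\<Sum>a\<in>S. \<Sum>b\<in>T. D a b\<bar> \<le> \<beta>"
  shows "\<bar>\<Sum>a\<in>X. \<Sum>b\<in>Y. f a * g b * D a b\<bar> \<le> \<beta>"
proof -
  define h where "h a = (\<Sum>b\<in>Y. g b * D a b)" for a
  have eq: "(\<Sum>a\<in>X. \<Sum>b\<in>Y. f a * g b * D a b) = (\<Sum>a\<in>X. f a * h a)"
    unfolding h_def by (simp add: sum_distrib_left mult.assoc)
  have swap: "(\<Sum>a\<in>S. h a) = (\<Sum>b\<in>Y. g b * (\<Sum>a\<in>S. D a b))" for S
    unfolding h_def by (simp add: sum_distrib_left sum.swap[of _ S])
  define Sp where "Sp = {x\<in>X. h x > 0}"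
  define Sm where "Sm = {x\<in>X. h x < 0}"
  define kp where "kp b = (\<Sum>a\<in>Sp. D a b)" for b
  define km where "km b = (\<Sum>a\<in>Sm. D a b)" for b
  have "(\<Sum>a\<in>X. f a * h a) \<le> (\<Sum>a\<in>Sp. h a)"
    unfolding Sp_def using fX f by (rule sum_mult_unit_interval_le(1))
  also have "\<dots> = (\<Sum>b\<in>Y. g b * kp b)" unfolding swap kp_def ..
  also have "\<dots> \<le> (\<Sum>b\<in>{y\<in>Y. kp y > 0}. kp b)"
    using fY g by (rule sum_mult_unit_interval_le(1))
  also have "\<dots> = (\<Sum>a\<in>Sp. \<Sum>b\<in>{y\<in>Y. kp y > 0}. D a b)"
    unfolding kp_def by (rule sum.swap)
  also have "\<dots> \<le> \<beta>" using D[of Sp "{y\<in>Y. kp y > 0}"] unfolding Sp_def by auto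
  finally have upper: "(\<Sum>a\<in>X. f a * h a) \<le> \<beta>" .
  have "- \<beta> \<le> (\<Sum>a\<in>Sm. \<Sum>b\<in>{y\<in>Y. km y < 0}. D a b)"
    using D[of Sm "{y\<in>Y. km y < 0}"] unfolding Sm_def by auto
  also have "\<dots> = (\<Sum>b\<in>{y\<in>Y. km y < 0}. km b)"
    unfolding km_def by (rule sum.swap)
  also have "\<dots> \<le> (\<Sum>b\<in>Y. g b * km b)"
    using fY g by (rule sum_mult_unit_interval_le(2))
  also have "\<dots> = (\<Sum>a\<in>Sm. h a)" unfolding swap km_def ..
  also have "\<dots> \<le> (\<Sum>a\<in>X. f a * h a)"
    unfolding Sm_def using fX f by (rule sum_mult_unit_interval_le(2))
  finally have lower: "- \<beta> \<le> (\<Sum>a\<in>X. f a * h a)" .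
  show ?thesis unfolding eq using upper lower by linarith
qed

lemma sum_PiE_discrepancy_le:
  fixes D :: "'a \<Rightarrow> 'a \<Rightarrow> real" and P :: "('i \<Rightarrow> 'a) \<Rightarrow> real" and \<beta> :: real
  assumes fin: "finite I" and ij: "i \<in> I" "j \<in> I" "i \<noteq> j" and Q: "finite (Q i)" "finite (Q j)"
    and factor: "\<And>u a b. P (u(j := b, i := a)) = f u a * g u b"
    and f: "\<And>u a. 0 \<le> f u a \<and> f u a \<le> 1" and g: "\<And>u b. 0 \<le> g u b \<and> g u b \<le> 1"
    and D: "\<And>S T. S \<subseteq> Q i \<Longrightarrow> T \<subseteq> Q j \<Longrightarrow> \<bar>\<Sum>a\<in>S. \<Sum>b\<in>T. D a b\<bar> \<le> \<beta>"
  shows "\<bar>\<Sum>v\<in>PiE I Q. D (v i) (v j) * P v\<bar> \<le> card (PiE (I - {i} - {j}) Q) * \<beta>"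
proof -
  have "(\<Sum>v\<in>PiE I Q. D (v i) (v j) * P v) =
      (\<Sum>u\<in>PiE (I - {i} - {j}) Q. \<Sum>a\<in>Q i. \<Sum>b\<in>Q j. f u a * g u b * D a b)"
    using sum_PiE_remove2[OF fin ij, where F = "\<lambda>v. D (v i) (v j) * P v" and Q = Q] ij(3)
    by (simp add: factor mult_ac)
  also have "\<bar>\<dots>\<bar> \<le> (\<Sum>u\<in>PiE (I - {i} - {j}) Q. \<bar>\<Sum>a\<in>Q i. \<Sum>b\<in>Q j. f u a * g u b * D a b\<bar>)"
    by (rule sum_abs)
  also have "\<dots> \<le> (\<Sum>u\<in>PiE (I - {i} - {j}) Q. \<beta>)"
    using f g D by (intro sum_mono bilinear_le_rectangle_bound[OF Q]) auto
  finally show ?thesis by simp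
qed

lemma card_PiE_remove2_mult:
  assumes "finite I" and "i \<in> I" "j \<in> I" "i \<noteq> j"
  shows "real (card (PiE (I - {i} - {j}) Q)) * (card (Q i) * card (Q j)) = (\<Prod>l\<in>I. real (card (Q l)))"
  using assms by (simp add: card_PiE prod.remove[of I i] prod.remove[of "I - {i}" j] mult_ac)

text \<open>No pair of \<open>Es\<close> contains both \<open>i\<close> and \<open>j\<close>, so the product separates the dependence on the
  values at \<open>i\<close> and at \<open>j\<close>.\<close>

lemma prod_pairs_fun_upd_split:
  fixes A :: "'a \<Rightarrow> 'a \<Rightarrow> real" and Es :: "('i::order \<times> 'i) set"
  assumes fin: "finite Es" and Es: "Es \<subseteq> {(a, b). a < b}" and "(i, j) \<notin> Es" and "i < j"
  shows "(\<Prod>e\<in>Es. A ((u(j := b, i := a)) (fst e)) ((u(j := b, i := a)) (snd e))) =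
    (\<Prod>e\<in>{e\<in>Es. fst e = i \<or> snd e = i}. A ((u(i := a)) (fst e)) ((u(i := a)) (snd e))) *
    (\<Prod>e\<in>{e\<in>Es. fst e \<noteq> i \<and> snd e \<noteq> i}. A ((u(j := b)) (fst e)) ((u(j := b)) (snd e)))"
proof -
  define Ei where "Ei = {e\<in>Es. fst e = i \<or> snd e = i}"
  have "Ei \<subseteq> Es" and rest: "Es - Ei = {e\<in>Es. fst e \<noteq> i \<and> snd e \<noteq> i}" unfolding Ei_def by auto
  have "fst e \<noteq> j \<and> snd e \<noteq> j" if "e \<in> Ei" for e
    using that Es assms(3,4) unfolding Ei_def by (cases e) auto
  then have at_i: "(\<Prod>e\<in>Ei. A ((u(j := b, i := a)) (fst e)) ((u(j := b, i := a)) (snd e))) =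
      (\<Prod>e\<in>Ei. A ((u(i := a)) (fst e)) ((u(i := a)) (snd e)))"
    by (intro prod.cong refl) auto
  have at_j: "(\<Prod>e\<in>Es - Ei. A ((u(j := b, i := a)) (fst e)) ((u(j := b, i := a)) (snd e))) =
      (\<Prod>e\<in>Es - Ei. A ((u(j := b)) (fst e)) ((u(j := b)) (snd e)))"
    unfolding Ei_def by (intro prod.cong refl) auto
  have "(\<Prod>e\<in>Es. A ((u(j := b, i := a)) (fst e)) ((u(j := b, i := a)) (snd e))) =
      (\<Prod>e\<in>Es - Ei. A ((u(j := b, i := a)) (fst e)) ((u(j := b, i := a)) (snd e))) *
      (\<Prod>e\<in>Ei. A ((u(j := b, i := a)) (fst e)) ((u(j := b, i := a)) (snd e)))"
    by (rule prod.subset_diff[OF \<open>Ei \<subseteq> Es\<close> fin])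
  then show ?thesis unfolding at_i at_j rest by (simp add: Ei_def mult.commute)
qed

text \<open>Induction on the pairs: replacing one factor \<open>A (v i) (v j)\<close> by the density \<open>c (i, j)\<close>
  changes the sum by at most \<open>\<gamma> \<Prod>i<k. card (Q i)\<close>, because the remaining product is a bilinear
  form in \<open>v i\<close> and \<open>v j\<close> with coefficients in \<open>[0, 1]\<close>.\<close>

lemma counting_lemma:
  fixes A :: "'a \<Rightarrow> 'a \<Rightarrow> real" and c :: "nat \<times> nat \<Rightarrow> real" and \<gamma> :: real
  assumes Es: "Es \<subseteq> {(i, j). i < j \<and> j < k}"
    and Q: "\<And>i. i < k \<Longrightarrow> finite (Q i)"
    and A: "\<And>a b. 0 \<le> A a b \<and> A a b \<le> 1"
    and c: "\<And>e. e \<in> Es \<Longrightarrow> 0 \<le> c e \<and> c e \<le> 1"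
    and reg: "\<And>i j S T. (i, j) \<in> Es \<Longrightarrow> S \<subseteq> Q i \<Longrightarrow> T \<subseteq> Q j \<Longrightarrow>
       \<bar>pair_weight A S T - c (i, j) * card S * card T\<bar> \<le> \<gamma> * card (Q i) * card (Q j)"
  shows "\<bar>(\<Sum>v\<in>PiE {..<k} Q. \<Prod>e\<in>Es. A (v (fst e)) (v (snd e))) - (\<Prod>e\<in>Es. c e) * (\<Prod>i<k. real (card (Q i)))\<bar>
     \<le> card Es * \<gamma> * (\<Prod>i<k. real (card (Q i)))"
proof -
  have "finite Es" using Es by (rule finite_subset) (auto intro: finite_subset[of _ "{..<k} \<times> {..<k}"])
  define K where "K = (\<Prod>i<k. real (card (Q i)))"
  show ?thesis
    unfolding K_def[symmetric] using \<open>finite Es\<close> Es c reg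
  proof (induction Es rule: finite_induct)
    case empty
    have "(\<Sum>v\<in>PiE {..<k} Q. 1::real) = K" unfolding K_def by (simp add: card_PiE)
    then show ?case by simp
  next
    case (insert e0 Es)
    obtain i j where e0: "e0 = (i, j)" by (cases e0)
    have ij: "i < j" "j < k" using insert.prems(1) e0 by auto
    define P where "P v = (\<Prod>e\<in>Es. A (v (fst e)) (v (snd e)))" for v
    define C where "C = (\<Prod>e\<in>Es. c e)"
    define D where "D a b = A a b - c e0" for a b
    have IH: "\<bar>(\<Sum>v\<in>PiE {..<k} Q. P v) - C * K\<bar> \<le> card Es * \<gamma> * K"
      unfolding P_def C_def by (rule insert.IH) (use insert.prems in auto)
    have split: "(\<Sum>v\<in>PiE {..<k} Q. \<Prod>e\<in>insert e0 Es. A (v (fst e)) (v (snd e))) - (\<Prod>e\<in>insert e0 Es. c e) * K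
      = (\<Sum>v\<in>PiE {..<k} Q. D (v i) (v j) * P v) + c e0 * ((\<Sum>v\<in>PiE {..<k} Q. P v) - C * K)"
      using insert.hyps e0
      by (simp add: P_def C_def D_def left_diff_distrib sum_subtractf sum_distrib_left algebra_simps)
    define f where "f u a = (\<Prod>e\<in>{e\<in>Es. fst e = i \<or> snd e = i}. A ((u(i := a)) (fst e)) ((u(i := a)) (snd e)))"
      for u a
    define g where "g u b = (\<Prod>e\<in>{e\<in>Es. fst e \<noteq> i \<and> snd e \<noteq> i}. A ((u(j := b)) (fst e)) ((u(j := b)) (snd e)))"
      for u b
    have factor: "P (u(j := b, i := a)) = f u a * g u b" for u a b
      unfolding P_def f_def g_def using insert.hyps insert.prems(1) e0 ij
      by (intro prod_pairs_fun_upd_split) auto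
    have "\<bar>\<Sum>v\<in>PiE {..<k} Q. D (v i) (v j) * P v\<bar>
        \<le> card (PiE ({..<k} - {i} - {j}) Q) * (\<gamma> * card (Q i) * card (Q j))"
    proof (rule sum_PiE_discrepancy_le[where f = f and g = g])
      show "P (u(j := b, i := a)) = f u a * g u b" for u a b by (rule factor)
      show "\<bar>\<Sum>a\<in>S. \<Sum>b\<in>T. D a b\<bar> \<le> \<gamma> * card (Q i) * card (Q j)" if "S \<subseteq> Q i" "T \<subseteq> Q j" for S T
        using insert.prems(3)[of i j S T] that e0
        by (simp add: D_def pair_weight_def sum_subtractf mult_ac)
    qed (use ij Q A in \<open>auto simp: f_def g_def intro: prod_nonneg prod_le_1\<close>)
    also have "\<dots> = \<gamma> * K"
      using card_PiE_remove2_mult[of "{..<k}" i j Q] ij unfolding K_def by (simp add: mult_ac)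
    finally have first: "\<bar>\<Sum>v\<in>PiE {..<k} Q. D (v i) (v j) * P v\<bar> \<le> \<gamma> * K" .
    have "\<bar>c e0 * ((\<Sum>v\<in>PiE {..<k} Q. P v) - C * K)\<bar> \<le> \<bar>(\<Sum>v\<in>PiE {..<k} Q. P v) - C * K\<bar>"
      using insert.prems(2)[of e0] by (simp add: abs_mult mult_left_le_one_le)
    then show ?case
      unfolding split using first IH insert.hyps by (simp add: algebra_simps)
  qed
qed

lemma exists_pairs_pos_of_sum_prod_pos:
  fixes A :: "'a \<Rightarrow> 'a \<Rightarrow> real"
  assumes sum: "(\<Sum>v\<in>X. \<Prod>e\<in>Es. A (v (fst e)) (v (snd e))) > 0"
    and "finite Es" and A: "\<And>a b. 0 \<le> A a b"
  shows "\<exists>v\<in>X. \<forall>(i, j)\<in>Es. A (v i) (v j) > 0"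
proof -
  obtain v where v: "v \<in> X" and pos: "(\<Prod>e\<in>Es. A (v (fst e)) (v (snd e))) > 0"
    using sum sum_nonpos[of X "\<lambda>v. \<Prod>e\<in>Es. A (v (fst e)) (v (snd e))"] by (meson not_le)
  have "A (v i) (v j) > 0" if "(i, j) \<in> Es" for i j
  proof (rule ccontr)
    assume "\<not> A (v i) (v j) > 0"
    then have "A (v (fst (i, j))) (v (snd (i, j))) = 0" using A[of "v i" "v j"] by simp
    then have "(\<Prod>e\<in>Es. A (v (fst e)) (v (snd e))) = 0"
      using that \<open>finite Es\<close> by (intro prod_zero bexI[of _ "(i, j)"])
    with pos show False by simp
  qed
  with v show ?thesis by blast
qed

lemma regular_dense_tuple_exists:
  fixes A :: "'a \<Rightarrow> 'a \<Rightarrow> real" and \<theta> \<gamma> :: real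
  assumes Es: "Es \<subseteq> {(i, j). i < j \<and> j < k}"
    and Q: "\<And>i. i < k \<Longrightarrow> finite (Q i) \<and> Q i \<noteq> {}"
    and A: "\<And>a b. 0 \<le> A a b \<and> A a b \<le> 1"
    and regular: "\<And>i j. (i, j) \<in> Es \<Longrightarrow> regular_pair A \<gamma> (Q i) (Q j)"
    and dense: "\<And>i j. (i, j) \<in> Es \<Longrightarrow> \<theta> \<le> pair_density A (Q i) (Q j)"
    and \<theta>: "0 < \<theta>" "\<theta> \<le> 1" and \<gamma>: "0 \<le> \<gamma>" "real (k * k) * \<gamma> < \<theta> ^ (k * k)"
  shows "\<exists>v\<in>PiE {..<k} Q. \<forall>(i, j)\<in>Es. A (v i) (v j) > 0"
proof -
  define c where "c e = pair_density A (Q (fst e)) (Q (snd e))" for e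
  define K where "K = (\<Prod>i<k. real (card (Q i)))"
  define N where "N = (\<Sum>v\<in>PiE {..<k} Q. \<Prod>e\<in>Es. A (v (fst e)) (v (snd e)))"
  have "finite Es" using Es by (rule finite_subset) (auto intro: finite_subset[of _ "{..<k} \<times> {..<k}"])
  have "card Es \<le> card ({..<k} \<times> {..<k})" using Es by (intro card_mono) auto
  then have card_Es: "card Es \<le> k * k" by (simp add: card_cartesian_product)
  have "K > 0" unfolding K_def using Q by (intro prod_pos) (simp add: card_gt_0_iff)
  have counting: "\<bar>N - (\<Prod>e\<in>Es. c e) * K\<bar> \<le> card Es * \<gamma> * K"
    unfolding N_def K_def
  proof (rule counting_lemma[OF Es])
    show "\<bar>pair_weight A S T - c (i, j) * card S * card T\<bar> \<le> \<gamma> * card (Q i) * card (Q j)"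
      if "(i, j) \<in> Es" "S \<subseteq> Q i" "T \<subseteq> Q j" for i j S T
      using regular[OF that(1)] that(2,3) unfolding regular_pair_def c_def by simp
  qed (use Q A pair_density_bounds[of A, OF A] in \<open>auto simp: c_def\<close>)
  have "card Es * \<gamma> < (\<Prod>e\<in>Es. c e)"
  proof -
    have "card Es * \<gamma> \<le> real (k * k) * \<gamma>"
      using card_Es \<gamma>(1) by (intro mult_right_mono) (simp_all only: of_nat_le_iff)
    also have "\<dots> < \<theta> ^ (k * k)" by (rule \<gamma>(2))
    also have "\<dots> \<le> \<theta> ^ card Es" using card_Es \<theta> by (intro power_decreasing) auto
    also have "\<dots> = (\<Prod>e\<in>Es. \<theta>)" by simp
    also have "\<dots> \<le> (\<Prod>e\<in>Es. c e)" using dense \<theta>(1) unfolding c_def by (intro prod_mono) auto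
    finally show ?thesis .
  qed
  then have "card Es * \<gamma> * K < (\<Prod>e\<in>Es. c e) * K" using \<open>K > 0\<close> by (rule mult_strict_right_mono)
  with counting have "N > 0" by linarith
  then show ?thesis unfolding N_def using \<open>finite Es\<close> A by (intro exists_pairs_pos_of_sum_prod_pos) auto
qed

section \<open>Graphs on the cube and on its blow-up\<close>

lemma finite_cube: "finite (cube d)"
  unfolding cube_def using finite_lists_length_eq[of "UNIV :: bool set" d] by simp

lemma card_cube: "card (cube d) = 2 ^ d"
  unfolding cube_def using card_lists_length_eq[of "UNIV :: bool set" d] by simp

lemma delta_commute: "delta x y = delta y x"
  unfolding delta_def by (simp add: eq_commute)

lemma delta_bounds:
  assumes "x \<in> cube d" and "y \<in> cube d" and "x \<noteq> y"
  shows "1 \<le> delta x y" and "delta x y \<le> d"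
proof -
  have "length x = d" "length y = d" using assms unfolding cube_def by auto
  have "\<exists>i<d. x ! i \<noteq> y ! i"
  proof (rule ccontr)
    assume "\<not> (\<exists>i<d. x ! i \<noteq> y ! i)"
    then have "x = y" using \<open>length x = d\<close> \<open>length y = d\<close> by (intro nth_equalityI) auto
    with \<open>x \<noteq> y\<close> show False ..
  qed
  then obtain i where "i < d" "x ! i \<noteq> y ! i" by blast
  then show "1 \<le> delta x y" and "delta x y \<le> d"
    unfolding delta_def using Least_le[of "\<lambda>i. x ! i \<noteq> y ! i" i] by auto
qed

lemma is_ordered_patternD:
  "is_ordered_pattern k EF \<Longrightarrow> {i, j} \<in> EF \<Longrightarrow> i \<noteq> j \<and> i < k \<and> j < k"
  unfolding is_ordered_pattern_def is_graph_def by (auto simp: doubleton_eq_iff)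

lemma contains_ordered_copyI:
  assumes pattern: "is_ordered_pattern k EF"
    and "\<And>i. i < k \<Longrightarrow> v i \<in> V"
    and "\<And>i j. i < j \<Longrightarrow> j < k \<Longrightarrow> lt (v i) (v j)"
    and edges: "\<And>i j. i < j \<Longrightarrow> {i, j} \<in> EF \<Longrightarrow> {v i, v j} \<in> E"
  shows "contains_ordered_copy lt V E k EF"
  unfolding contains_ordered_copy_def
proof (intro exI[of _ v] conjI allI impI)
  fix i j assume ij: "{i, j} \<in> EF"
  then have "i \<noteq> j" using is_ordered_patternD[OF pattern] by blast
  then show "{v i, v j} \<in> E"
    using edges[OF _ ij] edges[of j i] ij by (cases "i < j") (auto simp: insert_commute)
qed (use assms(2,3) in auto)

lemma two_powr_level_eq:
  assumes "1 \<le> l" and "l \<le> d"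
  shows "2 powr (real l - real d) = 2 ^ d / (2 * tau l d)"
proof -
  have "2 * tau l d = 2 ^ (2 * d - l)"
    unfolding tau_def using assms by (simp flip: power_Suc)
  moreover have "(2::real) ^ (2 * d - l) = 2 powr (real d - real l) * 2 ^ d"
    using assms by (simp add: powr_realpow[symmetric] powr_add[symmetric] of_nat_diff)
  ultimately show ?thesis by (simp add: powr_diff powr_realpow field_simps)
qed

lemma finite_edges: "is_graph V E \<Longrightarrow> finite V \<Longrightarrow> finite E"
  unfolding is_graph_def by (rule finite_subset[of _ "Pow V"]) auto

lemma two_card_edges_with:
  assumes G: "is_graph V E" and fin: "finite V" and sym: "\<And>u v. Pr u v \<Longrightarrow> Pr v u"
  shows "2 * real (card {e\<in>E. \<exists>u v. e = {u, v} \<and> Pr u v}) =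
    (\<Sum>a\<in>V. \<Sum>b\<in>V. of_bool ({a, b} \<in> E \<and> Pr a b))"
proof -
  define Y where "Y = {e\<in>E. \<exists>u v. e = {u, v} \<and> Pr u v}"
  define X where "X = {ab \<in> V \<times> V. {fst ab, snd ab} \<in> E \<and> Pr (fst ab) (snd ab)}"
  define ends where "ends e = {ab \<in> X. {fst ab, snd ab} = e}" for e
  have edge: "\<exists>u v. u \<in> V \<and> v \<in> V \<and> u \<noteq> v \<and> e = {u, v}" if "e \<in> E" for e
    using G that unfolding is_graph_def by blast
  have "finite Y" unfolding Y_def using finite_edges[OF G fin] by simp
  have "card (ends e) = 2" if e: "e \<in> Y" for e
  proof -
    obtain u v where uv: "e = {u, v}" "Pr u v" "e \<in> E" using e unfolding Y_def by blast
    then have "u \<in> V" "v \<in> V" "u \<noteq> v" using edge[of e] by (auto simp: doubleton_eq_iff)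
    moreover have "ends e = {(u, v), (v, u)}"
      unfolding ends_def X_def using uv sym \<open>u \<in> V\<close> \<open>v \<in> V\<close>
      by (auto simp: doubleton_eq_iff insert_commute)
    ultimately show ?thesis by simp
  qed
  moreover have "X = (\<Union>e\<in>Y. ends e)" unfolding X_def Y_def ends_def by blast
  moreover have "card (\<Union>e\<in>Y. ends e) = (\<Sum>e\<in>Y. card (ends e))"
    by (rule card_UN_disjoint) (use \<open>finite Y\<close> fin in \<open>auto simp: ends_def X_def\<close>)
  ultimately have "card X = 2 * card Y" by simp
  moreover have "(\<Sum>a\<in>V. \<Sum>b\<in>V. of_bool ({a, b} \<in> E \<and> Pr a b)) =
      (\<Sum>ab\<in>V \<times> V. (of_bool ({fst ab, snd ab} \<in> E \<and> Pr (fst ab) (snd ab)) :: real))"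
    by (simp add: sum.cartesian_product case_prod_beta)
  moreover have "\<dots> = real (card X)" unfolding X_def using fin by (simp add: Int_def)
  ultimately show ?thesis unfolding Y_def by simp
qed

lemma two_card_edges:
  assumes "is_graph V E" and "finite V"
  shows "2 * real (card E) = (\<Sum>a\<in>V. \<Sum>b\<in>V. of_bool ({a, b} \<in> E))"
proof -
  have "{e\<in>E. \<exists>u v. e = {u, v} \<and> True} = E" using assms(1) unfolding is_graph_def by blast
  then show ?thesis using two_card_edges_with[OF assms, of "\<lambda>u v. True"] by simp
qed

lemma weighted_level_sum_eq:
  assumes "is_graph (cube d) G"
  shows "(\<Sum>l=1..d. real (level_edges G l) / tau l d) =
    (\<Sum>x\<in>cube d. \<Sum>y\<in>cube d. of_bool ({x, y} \<in> G \<and> x \<noteq> y) / (2 * tau (delta x y) d))"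
proof -
  have level: "2 * real (level_edges G l) =
      (\<Sum>x\<in>cube d. \<Sum>y\<in>cube d. of_bool ({x, y} \<in> G \<and> x \<noteq> y \<and> delta x y = l))" for l
    unfolding level_edges_def by (rule two_card_edges_with[OF assms finite_cube]) (auto simp: delta_commute)
  then have "real (level_edges G l) / tau l d =
      (\<Sum>x\<in>cube d. \<Sum>y\<in>cube d. of_bool ({x, y} \<in> G \<and> x \<noteq> y \<and> delta x y = l)) / (2 * tau l d)" for l
    by (simp flip: level)
  then have "(\<Sum>l=1..d. real (level_edges G l) / tau l d) =
      (\<Sum>l=1..d. \<Sum>x\<in>cube d. \<Sum>y\<in>cube d. of_bool ({x, y} \<in> G \<and> x \<noteq> y \<and> delta x y = l) / (2 * tau l d))"
    by (simp add: sum_divide_distrib)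
  also have "\<dots> = (\<Sum>x\<in>cube d. \<Sum>y\<in>cube d. \<Sum>l=1..d.
      if delta x y = l then of_bool ({x, y} \<in> G \<and> x \<noteq> y) / (2 * tau l d) else 0)"
    by (subst sum.swap, rule sum.cong[OF refl], subst sum.swap) (auto intro!: sum.cong)
  also have "\<dots> = (\<Sum>x\<in>cube d. \<Sum>y\<in>cube d. of_bool ({x, y} \<in> G \<and> x \<noteq> y) / (2 * tau (delta x y) d))"
  proof (intro sum.cong refl)
    fix x y assume "x \<in> cube d" "y \<in> cube d"
    then show "(\<Sum>l=1..d. if delta x y = l then of_bool ({x, y} \<in> G \<and> x \<noteq> y) / (2 * tau l d) else 0) =
        of_bool ({x, y} \<in> G \<and> x \<noteq> y) / (2 * tau (delta x y) d)"
      using delta_bounds[of x d y] by (cases "x = y") (simp_all add: sum.delta)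
  qed
  finally show ?thesis .
qed

lemma finite_block: "finite (block m x)"
  unfolding block_def by simp

lemma card_block: "card (block m x) = m"
  unfolding block_def by (simp add: card_cartesian_product)

lemma sum_blocks:
  fixes F :: "bool list \<Rightarrow> bool list \<times> nat \<Rightarrow> real"
  shows "(\<Sum>x\<in>cube d. \<Sum>a\<in>block m x. F x a) = (\<Sum>a\<in>cube d \<times> {1..m}. F (fst a) a)"
proof -
  have "(\<Sum>a\<in>block m x. F x a) = (\<Sum>i\<in>{1..m}. F x (x, i))" for x
  proof -
    have "block m x = Pair x ` {1..m}" unfolding block_def by auto
    then show ?thesis by (simp add: sum.reindex inj_on_def)
  qed
  then show ?thesis by (simp add: sum.cartesian_product split_beta)
qed

lemma sum_blocks2:
  fixes F :: "bool list \<Rightarrow> bool list \<Rightarrow> bool list \<times> nat \<Rightarrow> bool list \<times> nat \<Rightarrow> real"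
  shows "(\<Sum>x\<in>cube d. \<Sum>y\<in>cube d. \<Sum>a\<in>block m x. \<Sum>b\<in>block m y. F x y a b) =
    (\<Sum>a\<in>cube d \<times> {1..m}. \<Sum>b\<in>cube d \<times> {1..m}. F (fst a) (fst b) a b)"
proof -
  have "(\<Sum>x\<in>cube d. \<Sum>y\<in>cube d. \<Sum>a\<in>block m x. \<Sum>b\<in>block m y. F x y a b) =
     (\<Sum>x\<in>cube d. \<Sum>a\<in>block m x. \<Sum>y\<in>cube d. \<Sum>b\<in>block m y. F x y a b)"
    by (intro sum.cong refl sum.swap)
  also have "\<dots> = (\<Sum>a\<in>cube d \<times> {1..m}. \<Sum>b\<in>cube d \<times> {1..m}. F (fst a) (fst b) a b)"
    by (simp add: sum_blocks)
  finally show ?thesis .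
qed

lemma cross_block_edges_eq:
  assumes G: "is_graph (cube d \<times> {1..m}) E"
  shows "(\<Sum>a\<in>cube d \<times> {1..m}. \<Sum>b\<in>cube d \<times> {1..m}. of_bool ({a, b} \<in> E) * of_bool (fst a \<noteq> fst b))
     = 2 * (\<Sum>l=1..d. real (block_level_edges E l))"
proof -
  let ?V = "cube d \<times> {1..m}"
  have "2 * real (block_level_edges E l) =
      (\<Sum>a\<in>?V. \<Sum>b\<in>?V. of_bool ({a, b} \<in> E \<and> fst a \<noteq> fst b \<and> delta (fst a) (fst b) = l))" for l
    unfolding block_level_edges_def using finite_cube
    by (intro two_card_edges_with[OF G]) (auto simp: delta_commute)
  then have "2 * (\<Sum>l=1..d. real (block_level_edges E l)) =
      (\<Sum>l=1..d. \<Sum>a\<in>?V. \<Sum>b\<in>?V. of_bool ({a, b} \<in> E \<and> fst a \<noteq> fst b \<and> delta (fst a) (fst b) = l))"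
    by (simp add: sum_distrib_left)
  also have "\<dots> =
      (\<Sum>a\<in>?V. \<Sum>b\<in>?V. \<Sum>l=1..d. of_bool ({a, b} \<in> E \<and> fst a \<noteq> fst b \<and> delta (fst a) (fst b) = l))"
    by (subst sum.swap) (intro sum.cong refl sum.swap)
  also have "\<dots> = (\<Sum>a\<in>?V. \<Sum>b\<in>?V. of_bool ({a, b} \<in> E) * of_bool (fst a \<noteq> fst b))"
  proof (intro sum.cong refl)
    fix a b assume "a \<in> ?V" "b \<in> ?V"
    then have "fst a \<in> cube d" "fst b \<in> cube d" by auto
    then show "(\<Sum>l=1..d. of_bool ({a, b} \<in> E \<and> fst a \<noteq> fst b \<and> delta (fst a) (fst b) = l)) =
        (of_bool ({a, b} \<in> E) * of_bool (fst a \<noteq> fst b) :: real)"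
      using delta_bounds[of "fst a" d "fst b"] by (cases "fst a = fst b") (simp_all add: sum.delta')
  qed
  finally show ?thesis by simp
qed

lemma sum_transversals_pair:
  fixes \<phi> :: "bool list \<times> nat \<Rightarrow> bool list \<times> nat \<Rightarrow> real"
  assumes "x \<in> cube d" "y \<in> cube d" "x \<noteq> y"
  shows "(\<Sum>c\<in>PiE (cube d) (block m). \<phi> (c x) (c y)) =
    real m ^ (2 ^ d - 2) * (\<Sum>a\<in>block m x. \<Sum>b\<in>block m y. \<phi> a b)"
proof -
  have "card (cube d - {x} - {y}) = 2 ^ d - 2"
    using assms by (simp add: card_Diff_singleton_if finite_cube card_cube)
  then have "card (PiE (cube d - {x} - {y}) (block m)) = m ^ (2 ^ d - 2)"
    by (simp add: card_PiE finite_cube card_block)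
  moreover have "(\<Sum>c\<in>PiE (cube d) (block m). \<phi> (c x) (c y)) =
      (\<Sum>u\<in>PiE (cube d - {x} - {y}) (block m). \<Sum>a\<in>block m x. \<Sum>b\<in>block m y. \<phi> a b)"
    using sum_PiE_remove2[OF finite_cube assms, where F = "\<lambda>c. \<phi> (c x) (c y)"] assms(3) by simp
  ultimately show ?thesis by simp
qed

lemma pair_weight_le_edges_between:
  assumes "finite R" and "G \<subseteq> R" and "finite P" and "finite Q" and "P \<inter> Q = {}"
  shows "pair_weight (\<lambda>a b. of_bool ({a, b} \<in> G)) P Q \<le> edges_between R P Q"
proof -
  define Z where "Z = {ab \<in> P \<times> Q. {fst ab, snd ab} \<in> G}"
  have "pair_weight (\<lambda>a b. of_bool ({a, b} \<in> G)) P Q = (\<Sum>ab\<in>P \<times> Q. (of_bool ({fst ab, snd ab} \<in> G) :: real))"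
    unfolding pair_weight_def by (simp add: sum.cartesian_product split_beta)
  also have "\<dots> = card Z" unfolding Z_def using assms(3,4) by (simp add: Int_def)
  also have "card Z = card ((\<lambda>ab. {fst ab, snd ab}) ` Z)"
  proof (rule card_image[symmetric], rule inj_onI)
    fix u v assume "u \<in> Z" "v \<in> Z" "{fst u, snd u} = {fst v, snd v}"
    then show "u = v" using assms(5) unfolding Z_def by (auto simp: doubleton_eq_iff prod_eq_iff)
  qed
  also have "\<dots> \<le> edges_between R P Q"
    unfolding edges_between_def using assms(1,2) by (intro card_mono) (auto simp: Z_def, force)
  finally show ?thesis by simp
qed

section \<open>Cluster graphs of a subgraph of the blow-up\<close>

definition bounded_block_density :: "nat \<Rightarrow> nat \<Rightarrow> real \<Rightarrow> (bool list \<times> nat) set set \<Rightarrow> bool" where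
  "bounded_block_density d m eps R \<longleftrightarrow>
     (\<forall>x\<in>cube d. \<forall>y\<in>cube d. \<forall>P Q. x \<noteq> y \<longrightarrow> P \<subseteq> block m x \<longrightarrow> Q \<subseteq> block m y \<longrightarrow>
        real (card P) \<ge> real m powr (2/3) \<longrightarrow> real (card Q) \<ge> real m powr (2/3) \<longrightarrow>
        real (edges_between R P Q)
          \<le> (1 + eps) * 2 powr (real (delta x y) - real d) * real (card P) * real (card Q))"

locale blow_up_partition =
  fixes d m :: nat and R G :: "(bool list \<times> nat) set set"
    and p :: "bool list \<times> nat \<Rightarrow> (bool list \<times> nat) set" and \<gamma> \<theta> \<eta> :: real
  assumes R_graph: "is_graph (cube d \<times> {1..m}) R" and G_subset: "G \<subseteq> R"
    and partition: "partition_map (cube d \<times> {1..m}) p"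
    and part_in_block: "\<And>a. a \<in> cube d \<times> {1..m} \<Longrightarrow> p a \<subseteq> block m (fst a)"
begin

abbreviation vertices :: "(bool list \<times> nat) set" where
  "vertices \<equiv> cube d \<times> {1..m}"

abbreviation adj :: "bool list \<times> nat \<Rightarrow> bool list \<times> nat \<Rightarrow> real" where
  "adj \<equiv> \<lambda>a b. of_bool ({a, b} \<in> G)"

text \<open>Property (ii) only controls parts of at least \<open>m powr (2/3)\<close> vertices; the small parts are
  charged to the error.\<close>

definition small :: "bool list \<times> nat \<Rightarrow> bool" where
  "small a \<longleftrightarrow> card (p a) < \<eta> * m"

definition good :: "bool list \<times> nat \<Rightarrow> bool list \<times> nat \<Rightarrow> bool" where
  "good a b \<longleftrightarrow> fst a \<noteq> fst b \<and> \<not> small a \<and> \<not> small b \<and>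
     regular_pair adj \<gamma> (p a) (p b) \<and> \<theta> \<le> pair_density adj (p a) (p b)"

definition cluster_graph :: "(bool list \<Rightarrow> bool list \<times> nat) \<Rightarrow> bool list set set" where
  "cluster_graph c = {{x, y} | x y. x \<in> cube d \<and> y \<in> cube d \<and> x \<noteq> y \<and> good (c x) (c y)}"

definition error_term :: "bool list \<times> nat \<Rightarrow> bool list \<times> nat \<Rightarrow> real" where
  "error_term a b = of_bool (small a) + of_bool (small b) + of_bool (\<not> regular_pair adj \<gamma> (p a) (p b)) + \<theta>"

lemma finite_vertices: "finite vertices"
  using finite_cube by simp

lemma finite_part: "a \<in> vertices \<Longrightarrow> finite (p a)"
  by (rule partition_map_finite_part[OF partition finite_vertices])

lemma card_part_pos: "a \<in> vertices \<Longrightarrow> card (p a) > 0"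
  by (rule partition_map_card_part_pos[OF partition finite_vertices])

lemma fst_part:
  assumes "a \<in> vertices" and "b \<in> p a"
  shows "fst b = fst a"
  using part_in_block[OF assms(1)] assms(2) unfolding block_def by auto

lemma adj_commute: "adj a b = adj b a"
  by (simp add: insert_commute)

lemma good_commute: "good a b \<longleftrightarrow> good b a"
  unfolding good_def
  using regular_pair_commute[of adj, OF adj_commute] pair_density_commute[of adj, OF adj_commute]
  by auto

lemma is_graph_cluster_graph: "is_graph (cube d) (cluster_graph c)"
  unfolding is_graph_def cluster_graph_def by blast

lemma mem_cluster_graph:
  assumes "x \<in> cube d" and "y \<in> cube d" and "x \<noteq> y"
  shows "{x, y} \<in> cluster_graph c \<longleftrightarrow> good (c x) (c y)"
  using assms good_commute[of "c x" "c y"] unfolding cluster_graph_def by (auto simp: doubleton_eq_iff)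

text \<open>An ordered copy of the pattern in a cluster graph lifts to the blow-up: the counting lemma
  embeds it into the regular, dense pairs of parts, and the blocks are ordered like the cube.\<close>

lemma ordered_copy_from_cluster_graph:
  assumes pattern: "is_ordered_pattern k EF" and c: "c \<in> PiE (cube d) (block m)"
    and copy: "contains_ordered_copy lexless (cube d) (cluster_graph c) k EF"
    and \<theta>: "0 < \<theta>" "\<theta> \<le> 1" and \<gamma>: "0 \<le> \<gamma>" "real (k * k) * \<gamma> < \<theta> ^ (k * k)"
  shows "contains_ordered_copy blockless vertices G k EF"
proof -
  obtain f where f: "\<And>i. i < k \<Longrightarrow> f i \<in> cube d"
    and ordered: "\<And>i j. i < j \<Longrightarrow> j < k \<Longrightarrow> lexless (f i) (f j)"
    and edges: "\<And>i j. {i, j} \<in> EF \<Longrightarrow> {f i, f j} \<in> cluster_graph c"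
    using copy unfolding contains_ordered_copy_def by blast
  have c_vertex: "c x \<in> vertices" and fst_c: "fst (c x) = x" if "x \<in> cube d" for x
    using c that unfolding PiE_def Pi_def block_def by auto
  define Q where "Q i = p (c (f i))" for i
  define Es where "Es = {(i, j). i < j \<and> {i, j} \<in> EF}"
  have good: "good (c (f i)) (c (f j))" if "(i, j) \<in> Es" for i j
  proof -
    have "i < j" "j < k" "{i, j} \<in> EF" using that is_ordered_patternD[OF pattern] unfolding Es_def by auto
    then have "f i \<noteq> f j" using ordered unfolding lexless_def by blast
    moreover have "f i \<in> cube d" "f j \<in> cube d" using f \<open>i < j\<close> \<open>j < k\<close> by auto
    ultimately show ?thesis using edges[OF \<open>{i, j} \<in> EF\<close>] mem_cluster_graph by simp
  qed
  have "\<exists>v\<in>PiE {..<k} Q. \<forall>(i, j)\<in>Es. adj (v i) (v j) > 0"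
  proof (rule regular_dense_tuple_exists[OF _ _ _ _ _ \<theta> \<gamma>])
    show "Es \<subseteq> {(i, j). i < j \<and> j < k}" unfolding Es_def using is_ordered_patternD[OF pattern] by auto
    show "finite (Q i) \<and> Q i \<noteq> {}" if "i < k" for i
      using finite_part[OF c_vertex[OF f[OF that]]] card_part_pos[OF c_vertex[OF f[OF that]]]
      unfolding Q_def by auto
    show "regular_pair adj \<gamma> (Q i) (Q j)" "\<theta> \<le> pair_density adj (Q i) (Q j)" if "(i, j) \<in> Es" for i j
      using good[OF that] unfolding good_def Q_def by auto
  qed simp
  then obtain v where v: "v \<in> PiE {..<k} Q" and v_edges: "\<forall>(i, j)\<in>Es. adj (v i) (v j) > 0" by blast
  have v_vertex: "v i \<in> vertices" and fst_v: "fst (v i) = f i" if "i < k" for i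
  proof -
    have "f i \<in> cube d" using f that .
    moreover have "v i \<in> p (c (f i))" using v that unfolding Q_def by auto
    ultimately show "v i \<in> vertices" "fst (v i) = f i"
      using partition_map_subsetD[OF partition c_vertex] fst_part[OF c_vertex] fst_c by auto
  qed
  show ?thesis
  proof (rule contains_ordered_copyI[OF pattern])
    show "blockless (v i) (v j)" if "i < j" "j < k" for i j
      unfolding blockless_def using fst_v ordered that by auto
    show "{v i, v j} \<in> G" if "i < j" "{i, j} \<in> EF" for i j
      using v_edges that unfolding Es_def by auto
  qed (rule v_vertex)
qed

lemma weighted_level_sum_cluster_graph_lt:
  fixes \<alpha> eps :: real
  assumes "d \<ge> 1" and pattern: "is_ordered_pattern k EF"
    and hyp: "\<forall>H. is_graph (cube d) H \<longrightarrow>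
      (1 / real d) * (\<Sum>l=1..d. real (level_edges H l) / tau l d) \<ge> \<alpha> + eps \<longrightarrow>
      contains_ordered_copy lexless (cube d) H k EF"
    and free: "\<not> contains_ordered_copy blockless vertices G k EF"
    and c: "c \<in> PiE (cube d) (block m)"
    and \<theta>: "0 < \<theta>" "\<theta> \<le> 1" and \<gamma>: "0 \<le> \<gamma>" "real (k * k) * \<gamma> < \<theta> ^ (k * k)"
  shows "(\<Sum>l=1..d. real (level_edges (cluster_graph c) l) / tau l d) < (\<alpha> + eps) * d"
proof (rule ccontr)
  assume "\<not> ?thesis"
  then have "\<alpha> + eps \<le> (1 / real d) * (\<Sum>l=1..d. real (level_edges (cluster_graph c) l) / tau l d)"
    using \<open>d \<ge> 1\<close> by (simp add: field_simps)
  then have "contains_ordered_copy lexless (cube d) (cluster_graph c) k EF"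
    using hyp is_graph_cluster_graph by blast
  with free show False using ordered_copy_from_cluster_graph[OF pattern c _ \<theta> \<gamma>] by blast
qed

lemma sum_transversals_weighted_level_sum:
  "(\<Sum>c\<in>PiE (cube d) (block m). \<Sum>l=1..d. real (level_edges (cluster_graph c) l) / tau l d) =
    real m ^ (2 ^ d - 2) *
      (\<Sum>a\<in>vertices. \<Sum>b\<in>vertices. of_bool (good a b) / (2 * tau (delta (fst a) (fst b)) d))"
proof -
  let ?w = "\<lambda>x y a b. of_bool (good a b) / (2 * tau (delta x y) d)"
  have "(\<Sum>c\<in>PiE (cube d) (block m). \<Sum>l=1..d. real (level_edges (cluster_graph c) l) / tau l d) =
      (\<Sum>c\<in>PiE (cube d) (block m). \<Sum>x\<in>cube d. \<Sum>y\<in>cube d. ?w x y (c x) (c y))"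
    unfolding weighted_level_sum_eq[OF is_graph_cluster_graph]
  proof (intro sum.cong refl)
    fix c x y assume "x \<in> cube d" "y \<in> cube d"
    then have "({x, y} \<in> cluster_graph c \<and> x \<noteq> y) = good (c x) (c y)"
      by (cases "x = y") (auto simp: mem_cluster_graph good_def)
    then show "of_bool ({x, y} \<in> cluster_graph c \<and> x \<noteq> y) / (2 * tau (delta x y) d) = ?w x y (c x) (c y)"
      by simp
  qed
  also have "\<dots> = (\<Sum>x\<in>cube d. \<Sum>y\<in>cube d. \<Sum>c\<in>PiE (cube d) (block m). ?w x y (c x) (c y))"
    by (subst sum.swap) (intro sum.cong refl sum.swap)
  also have "\<dots> = (\<Sum>x\<in>cube d. \<Sum>y\<in>cube d. real m ^ (2 ^ d - 2) * (\<Sum>a\<in>block m x. \<Sum>b\<in>block m y. ?w x y a b))"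
  proof (intro sum.cong refl)
    fix x y assume "x \<in> cube d" "y \<in> cube d"
    show "(\<Sum>c\<in>PiE (cube d) (block m). ?w x y (c x) (c y)) =
        real m ^ (2 ^ d - 2) * (\<Sum>a\<in>block m x. \<Sum>b\<in>block m y. ?w x y a b)"
    proof (cases "x = y")
      case True
      have "\<not> good a b" if "a \<in> block m x" "b \<in> block m y" for a b
        using that True unfolding good_def block_def by auto
      then have "(\<Sum>a\<in>block m x. \<Sum>b\<in>block m y. ?w x y a b) = 0" by simp
      moreover have "(\<Sum>c\<in>PiE (cube d) (block m). ?w x y (c x) (c y)) = 0" using True by (simp add: good_def)
      ultimately show ?thesis by simp
    qed (rule sum_transversals_pair[OF \<open>x \<in> cube d\<close> \<open>y \<in> cube d\<close>])
  qed
  also have "\<dots> = real m ^ (2 ^ d - 2) * (\<Sum>a\<in>vertices. \<Sum>b\<in>vertices. ?w (fst a) (fst b) a b)"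
    by (simp add: sum_distrib_left sum_blocks2)
  finally show ?thesis .
qed

lemma part_density_le:
  fixes eps :: real
  assumes "eps \<ge> 0" and "\<theta> \<ge> 0"
    and sparse: "bounded_block_density d m eps R" and large_parts: "real m powr (2/3) \<le> \<eta> * m"
    and a: "a \<in> vertices" and b: "b \<in> vertices" and ab: "fst a \<noteq> fst b"
  shows "part_density adj p a b \<le>
    (1 + eps) * 2 powr (real (delta (fst a) (fst b)) - real d) * of_bool (good a b) + error_term a b"
proof -
  have "0 \<le> error_term a b" unfolding error_term_def using \<open>\<theta> \<ge> 0\<close> by simp
  have density: "0 \<le> pair_density adj X Y" "pair_density adj X Y \<le> 1" for X Y
    using pair_density_bounds[of adj X Y] by auto
  show ?thesis
  proof (cases "good a b")
    case True
    then have "real m powr (2/3) \<le> card (p a)" "real m powr (2/3) \<le> card (p b)"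
      using large_parts unfolding good_def small_def by auto
    moreover have "p a \<subseteq> block m (fst a)" "p b \<subseteq> block m (fst b)" using part_in_block a b by auto
    moreover have "fst a \<in> cube d" "fst b \<in> cube d" using a b by auto
    ultimately have "edges_between R (p a) (p b) \<le>
        (1 + eps) * 2 powr (real (delta (fst a) (fst b)) - real d) * card (p a) * card (p b)"
      using sparse ab unfolding bounded_block_density_def by blast
    moreover have "pair_weight adj (p a) (p b) \<le> edges_between R (p a) (p b)"
      using \<open>p a \<subseteq> _\<close> \<open>p b \<subseteq> _\<close> ab unfolding block_def
      by (intro pair_weight_le_edges_between finite_edges[OF R_graph] G_subset finite_part a b
          finite_vertices) auto
    moreover have "real (card (p a)) * card (p b) > 0" using card_part_pos a b by simp
    ultimately have "part_density adj p a b \<le> (1 + eps) * 2 powr (real (delta (fst a) (fst b)) - real d)"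
      unfolding part_density_def pair_density_def by (simp add: divide_le_eq mult.assoc)
    then show ?thesis using True \<open>0 \<le> error_term a b\<close> by simp
  next
    case False
    have "part_density adj p a b \<le> error_term a b"
    proof (cases "small a \<or> small b \<or> \<not> regular_pair adj \<gamma> (p a) (p b)")
      case True
      then have "1 \<le> error_term a b" unfolding error_term_def using \<open>\<theta> \<ge> 0\<close> by auto
      then show ?thesis using density unfolding part_density_def by (meson order_trans)
    next
      case large_regular: False
      then have "pair_density adj (p a) (p b) < \<theta>" using False ab unfolding good_def by auto
      then show ?thesis unfolding part_density_def error_term_def by simp
    qed
    then show ?thesis using False by simp
  qed
qed

lemma card_small_le:
  assumes "\<eta> \<ge> 0"
  shows "card {a\<in>vertices. small a} \<le> card (p ` vertices) * (\<eta> * m)"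
proof -
  define S where "S = {X \<in> p ` vertices. card X < \<eta> * m}"
  have "{a\<in>vertices. small a} \<subseteq> \<Union>S"
    unfolding S_def small_def using partition_map_memD[OF partition] by blast
  moreover have "finite (\<Union>S)"
    unfolding S_def using finite_vertices finite_part by (intro finite_Union) auto
  ultimately have "card {a\<in>vertices. small a} \<le> (\<Sum>X\<in>S. card X)"
    using card_Union_le_sum_card[of S] by (meson card_mono le_trans)
  also have "real \<dots> \<le> (\<Sum>X\<in>S. \<eta> * m)"
    unfolding of_nat_sum by (rule sum_mono) (simp add: S_def)
  also have "\<dots> \<le> card (p ` vertices) * (\<eta> * m)"
    using assms finite_vertices unfolding S_def by (auto intro!: mult_right_mono card_mono)
  finally show ?thesis by simp
qed

lemma sum_error_term:
  "(\<Sum>a\<in>vertices. \<Sum>b\<in>vertices. error_term a b) =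
   2 * real (card vertices) * card {a\<in>vertices. small a} + irregular_count adj \<gamma> vertices p
     + \<theta> * (real (card vertices))\<^sup>2"
proof -
  have "(\<Sum>a\<in>vertices. \<Sum>b\<in>vertices. (of_bool (small a) :: real)) = card vertices * card {a\<in>vertices. small a}"
    "(\<Sum>a\<in>vertices. \<Sum>b\<in>vertices. (of_bool (small b) :: real)) = card vertices * card {a\<in>vertices. small a}"
    using finite_vertices by (simp_all add: Int_def)
  then show ?thesis
    unfolding error_term_def irregular_count_def by (simp add: sum.distrib power2_eq_square)
qed

lemma constant_on_parts_fst: "constant_on_parts vertices p (\<lambda>a b. of_bool (fst a \<noteq> fst b))"
  unfolding constant_on_parts_def
  by (metis fst_part partition_map_memD[OF partition])

lemma weighted_good_pairs_lt:
  fixes B :: real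
  assumes "d \<ge> 1" and "m \<ge> 1"
    and cluster_sparse: "\<And>c. c \<in> PiE (cube d) (block m) \<Longrightarrow>
      (\<Sum>l=1..d. real (level_edges (cluster_graph c) l) / tau l d) < B"
  shows "(\<Sum>a\<in>vertices. \<Sum>b\<in>vertices. of_bool (good a b) / (2 * tau (delta (fst a) (fst b)) d))
    < (real m)\<^sup>2 * B"
proof -
  define C where "C = PiE (cube d) (block m)"
  define K where "K = real m ^ (2 ^ d - 2)"
  have "K > 0" unfolding K_def using \<open>m \<ge> 1\<close> by simp
  have card_C: "card C = K * (real m)\<^sup>2"
  proof -
    have "2 ^ 1 \<le> (2::nat) ^ d" using \<open>d \<ge> 1\<close> by (intro power_increasing) auto
    then have "(2 ^ d - 2) + 2 = (2::nat) ^ d" by simp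
    then have "real m ^ (2 ^ d) = real m ^ ((2 ^ d - 2) + 2)" by (simp only:)
    also have "\<dots> = K * (real m)\<^sup>2" unfolding K_def by (rule power_add)
    finally show ?thesis unfolding C_def by (simp add: card_PiE finite_cube card_block card_cube)
  qed
  have "finite C" "C \<noteq> {}"
    unfolding C_def using \<open>m \<ge> 1\<close> finite_cube by (auto simp: finite_PiE finite_block PiE_eq_empty_iff block_def)
  have "K * (\<Sum>a\<in>vertices. \<Sum>b\<in>vertices. of_bool (good a b) / (2 * tau (delta (fst a) (fst b)) d))
      = (\<Sum>c\<in>C. \<Sum>l=1..d. real (level_edges (cluster_graph c) l) / tau l d)"
    unfolding C_def K_def by (rule sum_transversals_weighted_level_sum[symmetric])
  also have "\<dots> < (\<Sum>c\<in>C. B)"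
    using \<open>finite C\<close> \<open>C \<noteq> {}\<close> cluster_sparse unfolding C_def by (intro sum_strict_mono) auto
  also have "\<dots> = K * ((real m)\<^sup>2 * B)" using card_C by simp
  finally show ?thesis using \<open>K > 0\<close> by simp
qed

lemma sum_error_term_le:
  fixes eps :: real
  assumes "0 \<le> \<eta>" and "card (p ` vertices) * \<eta> \<le> eps"
    and "irregular_count adj \<gamma> vertices p \<le> \<gamma> * (card vertices)\<^sup>2"
    and "\<gamma> \<le> eps / 2 ^ d" and "\<theta> \<le> eps / 2 ^ d"
  shows "(\<Sum>a\<in>vertices. \<Sum>b\<in>vertices. error_term a b) \<le> 4 * eps * 2 ^ d * (real m)\<^sup>2"
proof -
  have card_V: "real (card vertices) = 2 ^ d * real m" by (simp add: card_cartesian_product card_cube)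
  have "2 * real (card vertices) * card {a\<in>vertices. small a}
      \<le> 2 * (2 ^ d * real m) * (card (p ` vertices) * (\<eta> * m))"
    unfolding card_V using card_small_le[OF assms(1)] by (intro mult_left_mono) auto
  also have "\<dots> \<le> 2 * (2 ^ d * real m) * (eps * m)"
    using assms(2) by (intro mult_left_mono) (auto simp: mult.assoc[symmetric] intro: mult_right_mono)
  finally have small: "2 * real (card vertices) * card {a\<in>vertices. small a} \<le> 2 * eps * 2 ^ d * (real m)\<^sup>2"
    by (simp add: power2_eq_square mult_ac)
  have "(\<gamma> + \<theta>) * (real (card vertices))\<^sup>2 \<le> (2 * eps / 2 ^ d) * (2 ^ d * real m)\<^sup>2"
    unfolding card_V using assms(4,5) by (intro mult_right_mono) auto
  also have "\<dots> = 2 * eps * 2 ^ d * (real m)\<^sup>2" by (simp add: power2_eq_square)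
  finally show ?thesis
    using small assms(3) unfolding sum_error_term by (simp add: algebra_simps)
qed

text \<open>The hypothesis, averaged over all transversals, bounds the weighted number of good pairs of
  parts, and property (ii) bounds the edges of \<open>G\<close> inside each good pair.\<close>

lemma cross_edges_le:
  fixes eps B :: real
  assumes "d \<ge> 1" and "m \<ge> 1" and "eps \<ge> 0" and "\<theta> \<ge> 0"
    and sparse: "bounded_block_density d m eps R" and large_parts: "real m powr (2/3) \<le> \<eta> * m"
    and cluster_sparse: "\<And>c. c \<in> PiE (cube d) (block m) \<Longrightarrow>
      (\<Sum>l=1..d. real (level_edges (cluster_graph c) l) / tau l d) < B"
  shows "(\<Sum>a\<in>vertices. \<Sum>b\<in>vertices. adj a b * of_bool (fst a \<noteq> fst b)) \<le>
    (1 + eps) * 2 ^ d * (real m)\<^sup>2 * B + (\<Sum>a\<in>vertices. \<Sum>b\<in>vertices. error_term a b)"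
proof -
  define W where "W = (\<Sum>a\<in>vertices. \<Sum>b\<in>vertices. of_bool (good a b) / (2 * tau (delta (fst a) (fst b)) d))"
  have W: "W < (real m)\<^sup>2 * B"
    unfolding W_def using \<open>d \<ge> 1\<close> \<open>m \<ge> 1\<close> cluster_sparse by (rule weighted_good_pairs_lt)
  have "(\<Sum>a\<in>vertices. \<Sum>b\<in>vertices. adj a b * of_bool (fst a \<noteq> fst b)) =
      (\<Sum>a\<in>vertices. \<Sum>b\<in>vertices. part_density adj p a b * of_bool (fst a \<noteq> fst b))"
    by (rule sum_mult_constant_on_parts[OF partition finite_vertices constant_on_parts_fst])
  also have "\<dots> \<le> (\<Sum>a\<in>vertices. \<Sum>b\<in>vertices.
      (1 + eps) * 2 ^ d * (of_bool (good a b) / (2 * tau (delta (fst a) (fst b)) d)) + error_term a b)"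
  proof (intro sum_mono)
    fix a b assume a: "a \<in> vertices" and b: "b \<in> vertices"
    show "part_density adj p a b * of_bool (fst a \<noteq> fst b) \<le>
        (1 + eps) * 2 ^ d * (of_bool (good a b) / (2 * tau (delta (fst a) (fst b)) d)) + error_term a b"
    proof (cases "fst a = fst b")
      case True
      then show ?thesis using \<open>\<theta> \<ge> 0\<close> by (simp add: good_def error_term_def)
    next
      case False
      have "fst a \<in> cube d" "fst b \<in> cube d" using a b by auto
      then have "2 powr (real (delta (fst a) (fst b)) - real d) = 2 ^ d / (2 * tau (delta (fst a) (fst b)) d)"
        using delta_bounds False by (intro two_powr_level_eq)
      then show ?thesis
        using part_density_le[OF \<open>eps \<ge> 0\<close> \<open>\<theta> \<ge> 0\<close> sparse large_parts a b False] False by simp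
    qed
  qed
  also have "\<dots> = (1 + eps) * 2 ^ d * W + (\<Sum>a\<in>vertices. \<Sum>b\<in>vertices. error_term a b)"
    unfolding W_def by (simp add: sum.distrib sum_distrib_left)
  also have "\<dots> \<le> (1 + eps) * 2 ^ d * ((real m)\<^sup>2 * B) + (\<Sum>a\<in>vertices. \<Sum>b\<in>vertices. error_term a b)"
    using W \<open>eps \<ge> 0\<close> by (intro add_right_mono mult_left_mono) auto
  finally show ?thesis by (simp add: mult.assoc)
qed

end

section \<open>Density of ordered-pattern-free subgraphs of the blow-up\<close>

lemma regular_block_refinement:
  fixes A :: "bool list \<times> nat \<Rightarrow> bool list \<times> nat \<Rightarrow> real" and \<gamma> :: real
  assumes "\<gamma> > 0" and "\<And>a b. 0 \<le> A a b \<and> A a b \<le> 1"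
  obtains p where "partition_map (cube d \<times> {1..m}) p"
    and "\<And>a. a \<in> cube d \<times> {1..m} \<Longrightarrow> p a \<subseteq> block m (fst a)"
    and "card (p ` (cube d \<times> {1..m})) \<le> tower (2 ^ d) (nat \<lceil>1 / \<gamma> ^ 3\<rceil> + 1)"
    and "irregular_count A \<gamma> (cube d \<times> {1..m}) p \<le> \<gamma> * (card (cube d \<times> {1..m}))\<^sup>2"
proof -
  let ?V = "cube d \<times> {1..m}"
  define p0 where "p0 a = block m (fst a)" for a :: "bool list \<times> nat"
  have "partition_map ?V p0" unfolding partition_map_def p0_def block_def by auto
  moreover have "card (p0 ` ?V) \<le> 2 ^ d"
  proof -
    have "p0 ` ?V \<subseteq> block m ` cube d" unfolding p0_def by auto
    then have "card (p0 ` ?V) \<le> card (block m ` cube d)" using finite_cube by (intro card_mono) auto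
    also have "\<dots> \<le> 2 ^ d" using card_image_le[OF finite_cube] by (simp add: card_cube)
    finally show ?thesis .
  qed
  moreover have "finite ?V" using finite_cube by simp
  ultimately obtain p where "partition_map ?V p" "\<forall>a\<in>?V. p a \<subseteq> p0 a"
    "card (p ` ?V) \<le> tower (2 ^ d) (nat \<lceil>1 / \<gamma> ^ 3\<rceil> + 1)" "irregular_count A \<gamma> ?V p \<le> \<gamma> * (card ?V)\<^sup>2"
    using regular_refinement[where A = A, OF _ _ _ assms] by blast
  then show ?thesis using that unfolding p0_def by blast
qed

lemma two_card_subgraph_le:
  assumes R: "is_graph (cube d \<times> {1..m}) R" and "G \<subseteq> R"
  shows "2 * real (card G) \<le>
    (\<Sum>a\<in>cube d \<times> {1..m}. \<Sum>b\<in>cube d \<times> {1..m}. of_bool ({a, b} \<in> G) * of_bool (fst a \<noteq> fst b))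
    + 2 * real (card R) - 2 * (\<Sum>l=1..d. real (block_level_edges R l))"
proof -
  let ?V = "cube d \<times> {1..m}"
  have G: "is_graph ?V G" using R \<open>G \<subseteq> R\<close> unfolding is_graph_def by blast
  have split: "(\<Sum>a\<in>?V. \<Sum>b\<in>?V. f a b) =
      (\<Sum>a\<in>?V. \<Sum>b\<in>?V. f a b * of_bool (fst a \<noteq> fst b)) + (\<Sum>a\<in>?V. \<Sum>b\<in>?V. f a b * of_bool (fst a = fst b))"
    for f :: "bool list \<times> nat \<Rightarrow> bool list \<times> nat \<Rightarrow> real"
  proof -
    have "\<And>a b. f a b = f a b * of_bool (fst a \<noteq> fst b) + f a b * of_bool (fst a = fst b)" by simp
    then show ?thesis by (simp add: sum.distrib[symmetric])
  qed
  have "(\<Sum>a\<in>?V. \<Sum>b\<in>?V. of_bool ({a, b} \<in> G) * of_bool (fst a = fst b)) \<le>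
      (\<Sum>a\<in>?V. \<Sum>b\<in>?V. of_bool ({a, b} \<in> R) * (of_bool (fst a = fst b) :: real))"
    using \<open>G \<subseteq> R\<close> by (intro sum_mono) auto
  then show ?thesis
    using split[of "\<lambda>a b. of_bool ({a, b} \<in> G)"] split[of "\<lambda>a b. of_bool ({a, b} \<in> R)"]
      two_card_edges[OF G] two_card_edges[OF R] cross_block_edges_eq[OF R]
      finite_cube by simp
qed

lemma ratio_le_of_bounds:
  fixes \<alpha> eps D g r :: real
  assumes "0 \<le> \<alpha>" "\<alpha> \<le> 1" "0 < eps" "eps \<le> 1/2" "D > 0"
    and g: "2 * g \<le> (2 * (1 + eps) * (\<alpha> + eps) + 12 * eps) * D" and r: "(1 - eps) * D \<le> r"
  shows "g / r \<le> \<alpha> + 20 * eps"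
proof -
  have "2 * (1 + eps) * (\<alpha> + eps) + 12 * eps \<le> 2 * (\<alpha> + 20 * eps) * (1 - eps)"
  proof -
    have "0 \<le> eps * (26 - 4 * \<alpha> - 42 * eps)" using assms(1-4) by (intro mult_nonneg_nonneg) auto
    then show ?thesis by (simp add: algebra_simps)
  qed
  then have "(2 * (1 + eps) * (\<alpha> + eps) + 12 * eps) * D \<le> (2 * (\<alpha> + 20 * eps) * (1 - eps)) * D"
    using \<open>D > 0\<close> by (intro mult_right_mono) auto
  with g have "2 * g \<le> 2 * (\<alpha> + 20 * eps) * ((1 - eps) * D)" by (simp add: mult.assoc)
  also have "\<dots> \<le> 2 * (\<alpha> + 20 * eps) * r"
    using r assms(1,3) by (intro mult_left_mono) auto
  finally have "g \<le> (\<alpha> + 20 * eps) * r" by linarith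
  moreover have "(1 - eps) * D > 0" using assms(4,5) by simp
  then have "r > 0" using r by linarith
  ultimately show ?thesis by (simp add: divide_le_eq)
qed

lemma subgraph_ratio_le_of_cross_bound:
  fixes \<alpha> eps :: real
  assumes \<alpha>: "0 \<le> \<alpha>" "\<alpha> \<le> 1" and eps: "0 < eps" "eps \<le> 1/2" and "d \<ge> 1" "m \<ge> 1"
    and R: "is_graph (cube d \<times> {1..m}) R" and "G \<subseteq> R"
    and levels: "\<forall>l\<in>{1..d}. approx_eq eps (real (block_level_edges R l)) (2 ^ (d - 1) * real m ^ 2)"
    and total: "approx_eq eps (real (card R)) (real d * 2 ^ (d - 1) * real m ^ 2)"
    and cross: "(\<Sum>a\<in>cube d \<times> {1..m}. \<Sum>b\<in>cube d \<times> {1..m}. of_bool ({a, b} \<in> G) * of_bool (fst a \<noteq> fst b))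
      \<le> (1 + eps) * 2 ^ d * (real m)\<^sup>2 * ((\<alpha> + eps) * d) + 4 * eps * 2 ^ d * (real m)\<^sup>2"
  shows "real (card G) / real (card R) \<le> \<alpha> + 20 * eps"
proof -
  define D where "D = real d * 2 ^ (d - 1) * (real m)\<^sup>2"
  have "D > 0" unfolding D_def using \<open>d \<ge> 1\<close> \<open>m \<ge> 1\<close> by simp
  have two_pow: "(2::real) ^ d = 2 * 2 ^ (d - 1)" using \<open>d \<ge> 1\<close> by (simp flip: power_Suc)
  have "(1 - eps) * D \<le> (\<Sum>l=1..d. real (block_level_edges R l))"
  proof -
    have "(\<Sum>l=1..d. (1 - eps) * (2 ^ (d - 1) * (real m)\<^sup>2)) \<le> (\<Sum>l=1..d. real (block_level_edges R l))"
      using levels unfolding approx_eq_def by (intro sum_mono) auto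
    then show ?thesis unfolding D_def by (simp add: mult_ac)
  qed
  moreover have "(1 - eps) * D \<le> card R" "card R \<le> (1 + eps) * D"
    using total unfolding approx_eq_def D_def by (auto simp: mult_ac)
  moreover have "4 * eps * 2 ^ d * (real m)\<^sup>2 \<le> 8 * eps * D"
  proof -
    have "1 * (2 ^ (d - 1) * (real m)\<^sup>2) \<le> real d * (2 ^ (d - 1) * (real m)\<^sup>2)"
      using \<open>d \<ge> 1\<close> by (intro mult_right_mono) auto
    then have "8 * eps * (2 ^ (d - 1) * (real m)\<^sup>2) \<le> 8 * eps * D"
      unfolding D_def using eps by (intro mult_left_mono) (auto simp: mult_ac)
    then show ?thesis by (simp add: two_pow mult_ac)
  qed
  ultimately have "2 * real (card G) \<le> (2 * (1 + eps) * (\<alpha> + eps) + 12 * eps) * D"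
    using two_card_subgraph_le[OF R \<open>G \<subseteq> R\<close>] cross unfolding D_def two_pow
    by (simp add: algebra_simps)
  then show ?thesis
    using ratio_le_of_bounds[OF \<alpha> eps \<open>D > 0\<close>] \<open>(1 - eps) * D \<le> card R\<close> by blast
qed

lemma pattern_free_subgraph_ratio_le:
  fixes \<alpha> eps \<gamma> \<eta> :: real and R G :: "(bool list \<times> nat) set set"
  assumes \<alpha>: "0 \<le> \<alpha>" "\<alpha> \<le> 1" and eps: "0 < eps" "eps \<le> 1/2" and "d \<ge> 1" "m \<ge> 1"
    and pattern: "is_ordered_pattern k EF"
    and hyp: "\<forall>H. is_graph (cube d) H \<longrightarrow>
      (1 / real d) * (\<Sum>l=1..d. real (level_edges H l) / tau l d) \<ge> \<alpha> + eps \<longrightarrow>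
      contains_ordered_copy lexless (cube d) H k EF"
    and R: "is_graph (cube d \<times> {1..m}) R"
    and levels: "\<forall>l\<in>{1..d}. approx_eq eps (real (block_level_edges R l)) (2 ^ (d - 1) * real m ^ 2)"
    and total: "approx_eq eps (real (card R)) (real d * 2 ^ (d - 1) * real m ^ 2)"
    and sparse: "bounded_block_density d m eps R"
    and "G \<subseteq> R" and free: "\<not> contains_ordered_copy blockless (cube d \<times> {1..m}) G k EF"
    and \<gamma>: "0 < \<gamma>" "\<gamma> \<le> eps / 2 ^ d" "real (k * k) * \<gamma> < (eps / 2 ^ d) ^ (k * k)"
    and \<eta>: "0 \<le> \<eta>" "tower (2 ^ d) (nat \<lceil>1 / \<gamma> ^ 3\<rceil> + 1) * \<eta> \<le> eps" "real m powr (2/3) \<le> \<eta> * m"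
  shows "real (card G) / real (card R) \<le> \<alpha> + 20 * eps"
proof -
  define \<theta> where "\<theta> = eps / 2 ^ d"
  have "eps \<le> 2 ^ d" using eps one_le_power[of "2::real" d] by linarith
  then have \<theta>: "0 < \<theta>" "\<theta> \<le> 1" using eps unfolding \<theta>_def by auto
  obtain p where partition: "partition_map (cube d \<times> {1..m}) p"
    and in_block: "\<And>a. a \<in> cube d \<times> {1..m} \<Longrightarrow> p a \<subseteq> block m (fst a)"
    and card_p: "card (p ` (cube d \<times> {1..m})) \<le> tower (2 ^ d) (nat \<lceil>1 / \<gamma> ^ 3\<rceil> + 1)"
    and irregular: "irregular_count (\<lambda>a b. of_bool ({a, b} \<in> G)) \<gamma> (cube d \<times> {1..m}) p
      \<le> \<gamma> * (card (cube d \<times> {1..m}))\<^sup>2"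
    using regular_block_refinement[OF \<gamma>(1), of "\<lambda>a b. of_bool ({a, b} \<in> G)"] by auto
  interpret blow_up_partition d m R G p \<gamma> \<theta> \<eta>
    using R \<open>G \<subseteq> R\<close> partition in_block by unfold_locales
  have cluster_sparse: "(\<Sum>l=1..d. real (level_edges (cluster_graph c) l) / tau l d) < (\<alpha> + eps) * d"
    if "c \<in> PiE (cube d) (block m)" for c
    using weighted_level_sum_cluster_graph_lt[OF \<open>d \<ge> 1\<close> pattern hyp free that \<theta>] \<gamma> unfolding \<theta>_def by simp
  have "card (p ` vertices) * \<eta> \<le> eps"
    using card_p \<eta>(1,2) by (meson mult_right_mono of_nat_le_iff order_trans)
  then have errors: "(\<Sum>a\<in>vertices. \<Sum>b\<in>vertices. error_term a b) \<le> 4 * eps * 2 ^ d * (real m)\<^sup>2"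
    using \<eta>(1) irregular \<gamma>(2) by (intro sum_error_term_le) (auto simp: \<theta>_def)
  have cross: "(\<Sum>a\<in>vertices. \<Sum>b\<in>vertices. adj a b * of_bool (fst a \<noteq> fst b)) \<le>
      (1 + eps) * 2 ^ d * (real m)\<^sup>2 * ((\<alpha> + eps) * d) + 4 * eps * 2 ^ d * (real m)\<^sup>2"
    using cross_edges_le[OF \<open>d \<ge> 1\<close> \<open>m \<ge> 1\<close> _ _ sparse \<eta>(3) cluster_sparse] errors eps \<theta> by simp
  show ?thesis
    using subgraph_ratio_le_of_cross_bound[OF \<alpha> eps \<open>d \<ge> 1\<close> \<open>m \<ge> 1\<close> R \<open>G \<subseteq> R\<close> levels total] cross by simp
qed

lemma powr_two_thirds_le:
  fixes \<eta> :: real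
  assumes "\<eta> > 0" and "real m \<ge> (1 / \<eta>) ^ 3"
  shows "real m powr (2/3) \<le> \<eta> * m"
proof (cases "m = 0")
  case False
  define r where "r = real m powr (1/3)"
  have "r > 0" "r ^ 3 = m" unfolding r_def using False by (simp_all add: powr_power)
  have "1 / \<eta> \<le> r"
  proof (rule ccontr)
    assume "\<not> 1 / \<eta> \<le> r"
    then have "r ^ 3 < (1 / \<eta>) ^ 3" using \<open>r > 0\<close> by (intro power_strict_mono) auto
    then show False using \<open>r ^ 3 = m\<close> assms(2) by simp
  qed
  then have "1 \<le> \<eta> * r" using assms(1) by (simp add: field_simps)
  have "real m powr (2/3) = real m powr (1 - 1/3)" by simp
  also have "\<dots> = real m powr 1 / real m powr (1/3)" by (rule powr_diff)
  also have "\<dots> = real m / r" unfolding r_def using False by simp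
  also have "\<dots> \<le> \<eta> * m"
  proof -
    have "real m * 1 \<le> real m * (\<eta> * r)" using \<open>1 \<le> \<eta> * r\<close> by (rule mult_left_mono) simp
    then show ?thesis using \<open>r > 0\<close> by (simp add: divide_le_eq mult_ac)
  qed
  finally show ?thesis .
qed simp

lemma rho_le:
  fixes b :: real
  assumes "finite E" and "0 \<le> b"
    and "\<And>E'. E' \<subseteq> E \<Longrightarrow> \<not> contains_ordered_copy lt V E' k EF \<Longrightarrow> real (card E') / real (card E) \<le> b"
  shows "rho lt V E k EF \<le> b"
  unfolding rho_def
proof (rule Max.boundedI)
  show "finite (insert 0 {real (card E') / real (card E) | E'.
      E' \<subseteq> E \<and> \<not> contains_ordered_copy lt V E' k EF})"
    using assms(1) by simp
qed (use assms(2,3) in auto)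

lemma exists_counting_error:
  fixes \<theta> :: real
  assumes "\<theta> > 0"
  shows "\<exists>\<gamma>>0. \<gamma> \<le> \<theta> \<and> real (k * k) * \<gamma> < \<theta> ^ (k * k)"
proof -
  define K where "K = real (k * k)"
  define \<gamma> where "\<gamma> = min \<theta> (\<theta> ^ (k * k) / (K + 1))"
  have "K \<ge> 0" unfolding K_def by simp
  then have "\<gamma> > 0" unfolding \<gamma>_def using assms by simp
  have "K * \<gamma> \<le> K * (\<theta> ^ (k * k) / (K + 1))"
    unfolding \<gamma>_def using \<open>K \<ge> 0\<close> by (intro mult_left_mono) auto
  also have "\<dots> < \<theta> ^ (k * k)" using assms \<open>K \<ge> 0\<close> by (simp add: field_simps)
  finally have "K * \<gamma> < \<theta> ^ (k * k)" .
  moreover have "\<gamma> \<le> \<theta>" unfolding \<gamma>_def by simp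
  ultimately show ?thesis using \<open>\<gamma> > 0\<close> unfolding K_def by blast
qed

lemma limsup_rho_le:
  fixes \<alpha> eps :: real and R :: "nat \<Rightarrow> nat \<Rightarrow> (bool list \<times> nat) set set"
  assumes \<alpha>: "0 \<le> \<alpha>" "\<alpha> \<le> 1" and eps: "0 < eps" "eps \<le> 1/2" and "d \<ge> 1"
    and pattern: "is_ordered_pattern k EF"
    and hyp: "\<forall>H. is_graph (cube d) H \<longrightarrow>
      (1 / real d) * (\<Sum>l=1..d. real (level_edges H l) / tau l d) \<ge> \<alpha> + eps \<longrightarrow>
      contains_ordered_copy lexless (cube d) H k EF"
    and family: "R_family R"
  shows "limsup (\<lambda>m. ereal (rho blockless (cube d \<times> {1..m}) (R m d) k EF)) \<le> ereal (\<alpha> + 20 * eps)"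
proof -
  obtain M where M: "\<And>m. m \<ge> M \<Longrightarrow>
      (\<forall>l\<in>{1..d}. approx_eq eps (real (block_level_edges (R m d) l)) (2 ^ (d - 1) * real m ^ 2)) \<and>
      approx_eq eps (real (card (R m d))) (real d * 2 ^ (d - 1) * real m ^ 2) \<and>
      bounded_block_density d m eps (R m d)"
    using family eps unfolding R_family_def bounded_block_density_def by blast
  have "eps / 2 ^ d > 0" using eps by simp
  then obtain \<gamma> where \<gamma>: "\<gamma> > 0" "\<gamma> \<le> eps / 2 ^ d" "real (k * k) * \<gamma> < (eps / 2 ^ d) ^ (k * k)"
    using exists_counting_error by blast
  define T where "T = tower (2 ^ d) (nat \<lceil>1 / \<gamma> ^ 3\<rceil> + 1)"
  define \<eta> where "\<eta> = eps / (real T + 1)"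
  have "\<eta> > 0" "T * \<eta> \<le> eps" unfolding \<eta>_def using eps by (simp_all add: field_simps)
  have "\<forall>\<^sub>F m in sequentially. ereal (rho blockless (cube d \<times> {1..m}) (R m d) k EF) \<le> ereal (\<alpha> + 20 * eps)"
    unfolding eventually_sequentially
  proof (intro exI[of _ "max M (max 1 (nat \<lceil>(1 / \<eta>) ^ 3\<rceil>))"] allI impI)
    fix m assume m: "max M (max 1 (nat \<lceil>(1 / \<eta>) ^ 3\<rceil>)) \<le> m"
    then have "real m powr (2/3) \<le> \<eta> * m"
      using \<open>\<eta> > 0\<close> by (intro powr_two_thirds_le) (auto simp: nat_le_iff ceiling_le_iff)
    have "m \<ge> 1" "is_graph (cube d \<times> {1..m}) (R m d)" using m family unfolding R_family_def by auto
    show "ereal (rho blockless (cube d \<times> {1..m}) (R m d) k EF) \<le> ereal (\<alpha> + 20 * eps)"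
      unfolding ereal_less_eq
    proof (rule rho_le)
      show "real (card G) / real (card (R m d)) \<le> \<alpha> + 20 * eps"
        if "G \<subseteq> R m d" "\<not> contains_ordered_copy blockless (cube d \<times> {1..m}) G k EF" for G
        using M[of m] m \<open>\<eta> > 0\<close> \<open>T * \<eta> \<le> eps\<close> \<open>real m powr (2/3) \<le> \<eta> * m\<close> unfolding T_def
        by (intro pattern_free_subgraph_ratio_le[OF \<alpha> eps \<open>d \<ge> 1\<close> \<open>m \<ge> 1\<close> pattern hyp
              \<open>is_graph _ (R m d)\<close> _ _ _ that \<gamma>]) auto
    qed (use \<open>is_graph _ (R m d)\<close> finite_cube finite_edges \<alpha> eps in auto)
  qed
  then show ?thesis by (rule Limsup_bounded)
qed

theorem lemma3p6:
  fixes alpha :: real and k :: nat and EF :: "nat set set"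
    and R :: "nat \<Rightarrow> nat \<Rightarrow> (bool list \<times> nat) set set"
  assumes "0 \<le> alpha" and "alpha \<le> 1"
    and "is_ordered_pattern k EF"
    and "\<forall>eps>0. \<exists>D. \<forall>d\<ge>D. \<forall>G. is_graph (cube d) G \<longrightarrow>
           (1 / real d) * (\<Sum>l=1..d. real (level_edges G l) / tau l d) \<ge> alpha + eps \<longrightarrow>
           contains_ordered_copy lexless (cube d) G k EF"
    and "R_family R"
  shows "limsup (\<lambda>d. limsup (\<lambda>m. ereal (rho blockless (cube d \<times> {1..m}) (R m d) k EF)))
           \<le> ereal alpha"
proof (rule ereal_le_epsilon2)
  fix e :: real assume "0 < e"
  define eps where "eps = min (1/2) (e / 20)"
  have eps: "0 < eps" "eps \<le> 1/2" "20 * eps \<le> e" unfolding eps_def using \<open>0 < e\<close> by auto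
  then obtain D where D: "\<forall>d\<ge>D. \<forall>G. is_graph (cube d) G \<longrightarrow>
      (1 / real d) * (\<Sum>l=1..d. real (level_edges G l) / tau l d) \<ge> alpha + eps \<longrightarrow>
      contains_ordered_copy lexless (cube d) G k EF"
    using assms(4) by blast
  have "\<forall>\<^sub>F d in sequentially.
      limsup (\<lambda>m. ereal (rho blockless (cube d \<times> {1..m}) (R m d) k EF)) \<le> ereal (alpha + 20 * eps)"
    unfolding eventually_sequentially using D
    by (intro exI[of _ "max D 1"] allI impI limsup_rho_le[OF assms(1,2) eps(1,2) _ assms(3) _ assms(5)]) auto
  then have "limsup (\<lambda>d. limsup (\<lambda>m. ereal (rho blockless (cube d \<times> {1..m}) (R m d) k EF)))
      \<le> ereal (alpha + 20 * eps)"
    by (rule Limsup_bounded)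
  then show "limsup (\<lambda>d. limsup (\<lambda>m. ereal (rho blockless (cube d \<times> {1..m}) (R m d) k EF)))
      \<le> ereal alpha + ereal e"
    using eps(3) by (simp add: order_trans)
qed

end
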